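(* Let $\Sigma=(A_t,B_t,C_t,D_t)$ be an $(m,n)$-multirate system with state space $X$, input space $U$ and output space $Y$, and let $q\in\mathbb Z^+$ with $m/q,n/q\in\mathbb Z$. Put $T:=m\overline n$, $T':=T/q$, $\epsilon:=e^{2\pi j/T}$, and let $\widehat A_k,\widehat B_k,\widehat C_k$ ($k\in\mathbb Z$, indices mod $T$) be the period-$T$ Fourier coefficients of $A,B,C$. Define $T'$-periodic sequences $\widetilde A_t:X^q\to X^q$, $\widetilde B_t:U\to X^q$, $\widetilde C_t:X^q\to Y$, $\widetilde D_t:U\to Y$ by $\widetilde A_t=\sum_{r=0}^{T'-1}\widehat{\widetilde A}_re^{2\pi jtr/T'}$ (and similarly for $\widetilde B,\widetilde C$), where for $0\le r<T'$ \[ \widehat{\widetilde A}_r=\big(\widehat A_{rq+i-k}\,\epsilon^{-k}\big)_{i,k=0}^{q-1},\qquad \widehat{\widetilde B}_r=\mathrm{col}\big(\widehat B_{rq+i}\big)_{i=0}^{q-1},\qquad \widehat{\widetilde C}_r=\mathrm{row}\big(\widehat C_{rq-k}\,\epsilon^{-k}\big)_{k=0}^{q-1}, \] and $\widetilde D_t:=\frac1q\sum_{k=0}^{q-1}D_{t+kT'}$ for $0\le t<T'$. Then the $(m/q,n/q)$-multirate system $\widetilde\Sigma=(\widetilde A_t,\widetilde B_t,\widetilde C_t,\widetilde D_t)$ with state space $X^q$ (input space $U$, output space $Y$) is a $|\cdot|$-optimal $(m/q,n/q)$-multirate approximation of $\Sigma$. The statement remains true if $\widetilde A,\widetilde B,\widetilde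 C$ are instead defined through \[ \widehat{\widetilde A}_r=\big(\epsilon^{-i}\,\widehat A_{rq+i-k}\big)_{i,k=0}^{q-1},\qquad \widehat{\widetilde B}_r=\mathrm{col}\big(\epsilon^{-i}\,\widehat B_{rq+i}\big)_{i=0}^{q-1},\qquad \widehat{\widetilde C}_r=\mathrm{row}\big(\widehat C_{rq-k}\big)_{k=0}^{q-1}. \]
   Context: $j$ is the imaginary unit; $U,X,Y$ are separable complex Hilbert spaces. Upsampler $(\uparrow_q v)_t=v_{t/q}$ if $q\mid t$, else $0$; downsampler $(\downarrow_q v)_t=v_{qt}$. For $m,n\in\mathbb Z^+$, $c=\gcd(m,n)$, $\overline m=m/c$, $\overline n=n/c$ (note $(m/q,n/q)$ has the same $\overline m,\overline n$). An $(m,n)$-multirate system consists of $m\overline n$-periodic bounded operator sequences $A_t:X\to X$, $B_t:U\to X$, $C_t:X\to Y$, $D_t:U\to Y$ with $x_{t+1}=A_tx_t+B_tu^\circ_t$, $y^\circ_t=C_tx_t+D_tu^\circ_t$, $u^\circ=\uparrow_{\overline m}u$, $y=\downarrow_{\overline n}y^\circ$; it is also $(km,kn)$-multirate for all $k\in\mathbb Z^+$. Fourier coefficients of a $T$-periodic sequence: $\widehat A_k=\frac1T\sum_{t=0}^{T-1}A_te^{-2\pi jtk/T}$. In the claim, $(\cdot)_{i,k=0}^{q-1}$ denotes the $q\times q$ block operator matrix on $X^q$ with the given $(i,k)$ entry, col a column and row a row of operators. Harmonic transfer function: with $\mathcal T_T(A)$ the $T\times T$ block matrix with entry $\widehat A_{(r-\ell)\bmod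 T}$ at $(r,\ell)$, $\mathcal N_T:=\mathrm{diag}(e^{2\pi jk/T}I)_{k=0}^{T-1}$, $\Pi_{T,1,q}:V^T\to V^{qT}$ stacking $q$ copies and $\Pi^*_{T,1,q}$ summing the $q$ blocks, an $(M,N)$-multirate system has harmonic transfer function $\mathcal H(z)=\Pi_{M,1,\overline n}^*\big(z\mathcal C(\mathcal N_{M\overline n}-z\mathcal A)^{-1}\mathcal B+\mathcal D\big)\Pi_{N,1,\overline m}/\overline m:U^N\to Y^M$ (defined for $z$ near $0$), with $\mathcal A,\dots,\mathcal D$ the period-$M\overline n$ Toeplitz transforms. Norm: with $H_i(z)=\sum_kz^kh_{i,k}$ the entry in row $i$, column $0$ of $\mathcal H(z)$, $|\mathcal H|^2:=\sum_{i=0}^{M-1}\sum_\ell\sum_{k\ge0}\|h_{i,k}e_\ell\|^2\in[0,\infty]$, $(e_\ell)$ an orthonormal basis of $U$. Error system: for $\Sigma$ $(c\overline m,c\overline n)$-multirate and $\widehat\Sigma$ $(\widehat c\,\overline m,\widehat c\,\overline n)$-multirate, $\Sigma-\widehat\Sigma$ is the $(C\overline m,C\overline n)$-multirate system, $C=\mathrm{lcm}(c,\widehat c)$, with state space $X\oplus\widehat X$ and operators $\mathrm{diag}(A_t,\widehat A_t)$, $\mathrm{col}(B_t,\widehat B_t)$, $\mathrm{row}(C_t,-\widehat C_t)$, $D_t-\widehat D_t$. An $(m',n')$-multirate system $\widetilde\Sigma$ (input $U$, output $Y$) is a $|\cdot|$-optimal $(m',n')$-multirate approximation of $\Sigma$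 if $|\mathcal G_{\Sigma-\widetilde\Sigma}|\le|\mathcal G_{\Sigma-\widehat\Sigma}|$ for all $(m',n')$-multirate $\widehat\Sigma$ with input $U$ and output $Y$, where $\mathcal G_{\Sigma-\widehat\Sigma}$ is the harmonic transfer function of the error system. *)

theory Defs
  imports "HOL-Analysis.Analysis"
begin

text \<open>A complex Hilbert space is modelled as a real Hilbert space (real inner
product = real part of the complex inner product) equipped with a complex
scalar multiplication extending the real one, such that multiplication by the
imaginary unit is an isometry for the real inner product.\<close>

class chilbert = real_inner + complete_space +
  fixes scaleC :: "complex \<Rightarrow> 'a \<Rightarrow> 'a" (infixr \<open>*\<^sub>C\<close> 75)
  assumes scaleC_add_right: "a *\<^sub>C (x + y) = a *\<^sub>C x + a *\<^sub>C y"
    and scaleC_add_left: "(a + b) *\<^sub>C x = a *\<^sub>C x + b *\<^sub>C x"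
    and scaleC_scaleC: "a *\<^sub>C (b *\<^sub>C x) = (a * b) *\<^sub>C x"
    and scaleC_of_real: "complex_of_real r *\<^sub>C x = r *\<^sub>R x"
    and inner_scaleC_ii: "inner (\<i> *\<^sub>C x) (\<i> *\<^sub>C y) = inner x y"

instantiation prod :: (chilbert, chilbert) chilbert
begin
definition scaleC_prod_def: "c *\<^sub>C x = (c *\<^sub>C fst x, c *\<^sub>C snd x)"
instance
  by standard (auto simp: scaleC_prod_def scaleC_add_right scaleC_add_left scaleC_scaleC
      scaleC_of_real inner_scaleC_ii inner_prod_def)
end

instantiation vec :: (chilbert, finite) chilbert
begin
definition scaleC_vec_def: "c *\<^sub>C x = (\<chi> i. c *\<^sub>C (x $ i))"
instance
  by standard (auto simp: scaleC_vec_def vec_eq_iff scaleC_add_right scaleC_add_left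
      scaleC_scaleC scaleC_of_real inner_scaleC_ii inner_vec_def)
end

definition cinner :: "'a::chilbert \<Rightarrow> 'a \<Rightarrow> complex" where
  "cinner x y = Complex (inner x y) (inner x (\<i> *\<^sub>C y))"

definition cspan :: "'a::chilbert set \<Rightarrow> 'a set" where
  "cspan S = {x. \<exists>F c. finite F \<and> F \<subseteq> S \<and> x = (\<Sum>f\<in>F. c f *\<^sub>C f)}"

definition onb :: "'a::chilbert set \<Rightarrow> bool" where
  "onb E \<longleftrightarrow> (\<forall>e\<in>E. norm e = 1) \<and> (\<forall>e\<in>E. \<forall>e'\<in>E. e \<noteq> e' \<longrightarrow> cinner e e' = 0)
      \<and> closure (cspan E) = UNIV"

definition separable_hilbert :: "'a::chilbert itself \<Rightarrow> bool" where
  "separable_hilbert _ \<longleftrightarrow> separable_space (euclidean :: 'a topology)"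

definition bounded_clinear :: "('a::chilbert \<Rightarrow> 'b::chilbert) \<Rightarrow> bool" where
  "bounded_clinear f \<longleftrightarrow> bounded_linear f \<and> (\<forall>c x. f (c *\<^sub>C x) = c *\<^sub>C f x)"

definition cbar :: "nat \<Rightarrow> nat \<Rightarrow> nat" where "cbar m n = gcd m n"
definition mbar :: "nat \<Rightarrow> nat \<Rightarrow> nat" where "mbar m n = m div gcd m n"
definition nbar :: "nat \<Rightarrow> nat \<Rightarrow> nat" where "nbar m n = n div gcd m n"
definition period :: "nat \<Rightarrow> nat \<Rightarrow> nat" where "period m n = m * nbar m n"

definition multirate ::
  "nat \<Rightarrow> nat \<Rightarrow> (nat \<Rightarrow> 'x::chilbert \<Rightarrow> 'x) \<Rightarrow> (nat \<Rightarrow> 'u::chilbert \<Rightarrow> 'x)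
     \<Rightarrow> (nat \<Rightarrow> 'x \<Rightarrow> 'y::chilbert) \<Rightarrow> (nat \<Rightarrow> 'u \<Rightarrow> 'y) \<Rightarrow> bool" where
  "multirate m n A B C D \<longleftrightarrow> 0 < m \<and> 0 < n \<and>
     (\<forall>t. A (t + period m n) = A t \<and> B (t + period m n) = B t \<and>
          C (t + period m n) = C t \<and> D (t + period m n) = D t) \<and>
     (\<forall>t. bounded_clinear (A t) \<and> bounded_clinear (B t) \<and>
          bounded_clinear (C t) \<and> bounded_clinear (D t))"

definition fourier :: "nat \<Rightarrow> (nat \<Rightarrow> 'a \<Rightarrow> 'b::chilbert) \<Rightarrow> int \<Rightarrow> 'a \<Rightarrow> 'b" where
  "fourier T F k x = (1 / real T) *\<^sub>R
      (\<Sum>t<T. cis (- 2 * pi * real t * real_of_int k / real T) *\<^sub>C F t x)"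

text \<open>Block vectors in V^P are functions nat => V vanishing outside {..<P};
block operator matrices are functions nat => nat => (V => W).\<close>

definition toep :: "nat \<Rightarrow> (nat \<Rightarrow> 'a \<Rightarrow> 'b::chilbert) \<Rightarrow> nat \<Rightarrow> nat \<Rightarrow> 'a \<Rightarrow> 'b" where
  "toep P F r l = fourier P F ((int r - int l) mod int P)"

definition bvecs :: "nat \<Rightarrow> (nat \<Rightarrow> 'a::zero) set" where
  "bvecs P = {v. \<forall>r\<ge>P. v r = 0}"

text \<open>The operator N_P - z A (A the Toeplitz transform) on X^P.\<close>
definition resolv_op :: "nat \<Rightarrow> (nat \<Rightarrow> 'x::chilbert \<Rightarrow> 'x) \<Rightarrow> complex \<Rightarrow> (nat \<Rightarrow> 'x) \<Rightarrow> nat \<Rightarrow> 'x" where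
  "resolv_op P A z v = (\<lambda>r. if r < P then
      cis (2 * pi * real r / real P) *\<^sub>C v r - z *\<^sub>C (\<Sum>l<P. toep P A r l (v l)) else 0)"

text \<open>Entry in row i, column 0 of the harmonic transfer function H(z) of an
(M,N)-multirate system, applied to u.\<close>
definition htf_entry ::
  "nat \<Rightarrow> nat \<Rightarrow> (nat \<Rightarrow> 'x::chilbert \<Rightarrow> 'x) \<Rightarrow> (nat \<Rightarrow> 'u::chilbert \<Rightarrow> 'x)
     \<Rightarrow> (nat \<Rightarrow> 'x \<Rightarrow> 'y::chilbert) \<Rightarrow> (nat \<Rightarrow> 'u \<Rightarrow> 'y) \<Rightarrow> nat \<Rightarrow> complex \<Rightarrow> 'u \<Rightarrow> 'y" where
  "htf_entry M N A B C D i z u =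
     (let P = period M N;
          w = inv_into (bvecs P) (resolv_op P A z)
                (\<lambda>l. if l < P then (\<Sum>s'\<in>{s'. s' < P \<and> s' mod N = 0}. toep P B l s' u) else 0)
      in (1 / real (mbar M N)) *\<^sub>R
           (\<Sum>s\<in>{s. s < P \<and> s mod M = i}.
              z *\<^sub>C (\<Sum>l<P. toep P C s l (w l))
              + (\<Sum>s'\<in>{s'. s' < P \<and> s' mod N = 0}. toep P D s s' u)))"

definition htf_coeff ::
  "nat \<Rightarrow> nat \<Rightarrow> (nat \<Rightarrow> 'x::chilbert \<Rightarrow> 'x) \<Rightarrow> (nat \<Rightarrow> 'u::chilbert \<Rightarrow> 'x)
     \<Rightarrow> (nat \<Rightarrow> 'x \<Rightarrow> 'y::chilbert) \<Rightarrow> (nat \<Rightarrow> 'u \<Rightarrow> 'y) \<Rightarrow> nat \<Rightarrow> nat \<Rightarrow> 'u \<Rightarrow> 'y" where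
  "htf_coeff M N A B C D i = (THE h. \<exists>\<rho>>0. \<forall>z. norm z < \<rho> \<longrightarrow>
      (\<forall>u. (\<lambda>k. z ^ k *\<^sub>C h k u) sums htf_entry M N A B C D i z u))"

definition hnorm_sq :: "'u::chilbert set \<Rightarrow> nat \<Rightarrow> (nat \<Rightarrow> nat \<Rightarrow> 'u \<Rightarrow> 'y::chilbert) \<Rightarrow> ennreal" where
  "hnorm_sq E M h = (\<Sum>i<M. \<Sum>\<^sub>\<infinity>e\<in>E. \<Sum>\<^sub>\<infinity>k\<in>(UNIV::nat set). ennreal ((norm (h i k e))\<^sup>2))"

definition err_M :: "nat \<Rightarrow> nat \<Rightarrow> nat \<Rightarrow> nat \<Rightarrow> nat" where
  "err_M m n m' n' = lcm (gcd m n) (gcd m' n') * mbar m n"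
definition err_N :: "nat \<Rightarrow> nat \<Rightarrow> nat \<Rightarrow> nat \<Rightarrow> nat" where
  "err_N m n m' n' = lcm (gcd m n) (gcd m' n') * nbar m n"

definition err_norm_sq ::
  "'u::chilbert set \<Rightarrow> nat \<Rightarrow> nat \<Rightarrow> (nat \<Rightarrow> 'x::chilbert \<Rightarrow> 'x) \<Rightarrow> (nat \<Rightarrow> 'u \<Rightarrow> 'x)
     \<Rightarrow> (nat \<Rightarrow> 'x \<Rightarrow> 'y::chilbert) \<Rightarrow> (nat \<Rightarrow> 'u \<Rightarrow> 'y)
   \<Rightarrow> nat \<Rightarrow> nat \<Rightarrow> (nat \<Rightarrow> 'z::chilbert \<Rightarrow> 'z) \<Rightarrow> (nat \<Rightarrow> 'u \<Rightarrow> 'z)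
     \<Rightarrow> (nat \<Rightarrow> 'z \<Rightarrow> 'y) \<Rightarrow> (nat \<Rightarrow> 'u \<Rightarrow> 'y) \<Rightarrow> ennreal" where
  "err_norm_sq E m n A B C D m' n' A' B' C' D' =
     hnorm_sq E (err_M m n m' n')
       (htf_coeff (err_M m n m' n') (err_N m n m' n')
          (\<lambda>t (x, z). (A t x, A' t z))
          (\<lambda>t u. (B t u, B' t u))
          (\<lambda>t (x, z). C t x - C' t z)
          (\<lambda>t u. D t u - D' t u))"

definition mr_optimal ::
  "'z::chilbert itself \<Rightarrow> 'u::chilbert set \<Rightarrow> nat \<Rightarrow> nat \<Rightarrow> (nat \<Rightarrow> 'x::chilbert \<Rightarrow> 'x) \<Rightarrow> (nat \<Rightarrow> 'u \<Rightarrow> 'x)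
     \<Rightarrow> (nat \<Rightarrow> 'x \<Rightarrow> 'y::chilbert) \<Rightarrow> (nat \<Rightarrow> 'u \<Rightarrow> 'y)
   \<Rightarrow> nat \<Rightarrow> nat \<Rightarrow> (nat \<Rightarrow> 'w::chilbert \<Rightarrow> 'w) \<Rightarrow> (nat \<Rightarrow> 'u \<Rightarrow> 'w)
     \<Rightarrow> (nat \<Rightarrow> 'w \<Rightarrow> 'y) \<Rightarrow> (nat \<Rightarrow> 'u \<Rightarrow> 'y) \<Rightarrow> bool" where
  "mr_optimal _ E m n A B C D m' n' At Bt Ct Dt \<longleftrightarrow>
     multirate m' n' At Bt Ct Dt \<and>
     (\<forall>(Ah :: nat \<Rightarrow> 'z \<Rightarrow> 'z) Bh Ch Dh. multirate m' n' Ah Bh Ch Dh \<longrightarrow>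
        err_norm_sq E m n A B C D m' n' At Bt Ct Dt \<le> err_norm_sq E m n A B C D m' n' Ah Bh Ch Dh)"

text \<open>Enumeration of the block index type 'q by {0..<q}.\<close>
definition ix :: "'q::finite \<Rightarrow> nat" where
  "ix = (SOME f. bij_betw f (UNIV :: 'q set) {..<CARD('q)})"

definition epsm :: "nat \<Rightarrow> nat \<Rightarrow> complex" where
  "epsm T k = cis (- 2 * pi * real k / real T)"  \<comment> \<open>\<epsilon>^{-k}, \<epsilon> = e^{2\<pi>j/T}\<close>

context
  fixes m n q :: nat
begin

definition T0 :: nat where "T0 = period m n"
definition T1 :: nat where "T1 = T0 div q"

definition fidx :: "nat \<Rightarrow> int \<Rightarrow> int" where "fidx r d = (int (r * q) + d) mod int T0"

definition tD :: "(nat \<Rightarrow> 'u::chilbert \<Rightarrow> 'y::chilbert) \<Rightarrow> nat \<Rightarrow> 'u \<Rightarrow> 'y" where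
  "tD D t u = (1 / real q) *\<^sub>R (\<Sum>k<q. D (t mod T1 + k * T1) u)"

definition tAh1 :: "(nat \<Rightarrow> 'x::chilbert \<Rightarrow> 'x) \<Rightarrow> nat \<Rightarrow> 'x ^ 'q::finite \<Rightarrow> 'x ^ 'q" where
  "tAh1 A r v = (\<chi> a. \<Sum>b\<in>UNIV. fourier T0 A (fidx r (int (ix a) - int (ix b))) (epsm T0 (ix b) *\<^sub>C (v $ b)))"
definition tBh1 :: "(nat \<Rightarrow> 'u::chilbert \<Rightarrow> 'x::chilbert) \<Rightarrow> nat \<Rightarrow> 'u \<Rightarrow> 'x ^ 'q::finite" where
  "tBh1 B r u = (\<chi> a. fourier T0 B (fidx r (int (ix a))) u)"
definition tCh1 :: "(nat \<Rightarrow> 'x::chilbert \<Rightarrow> 'y::chilbert) \<Rightarrow> nat \<Rightarrow> 'x ^ 'q::finite \<Rightarrow> 'y" where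
  "tCh1 C r v = (\<Sum>b\<in>UNIV. fourier T0 C (fidx r (- int (ix b))) (epsm T0 (ix b) *\<^sub>C (v $ b)))"

definition tAh2 :: "(nat \<Rightarrow> 'x::chilbert \<Rightarrow> 'x) \<Rightarrow> nat \<Rightarrow> 'x ^ 'q::finite \<Rightarrow> 'x ^ 'q" where
  "tAh2 A r v = (\<chi> a. epsm T0 (ix a) *\<^sub>C (\<Sum>b\<in>UNIV. fourier T0 A (fidx r (int (ix a) - int (ix b))) (v $ b)))"
definition tBh2 :: "(nat \<Rightarrow> 'u::chilbert \<Rightarrow> 'x::chilbert) \<Rightarrow> nat \<Rightarrow> 'u \<Rightarrow> 'x ^ 'q::finite" where
  "tBh2 B r u = (\<chi> a. epsm T0 (ix a) *\<^sub>C fourier T0 B (fidx r (int (ix a))) u)"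
definition tCh2 :: "(nat \<Rightarrow> 'x::chilbert \<Rightarrow> 'y::chilbert) \<Rightarrow> nat \<Rightarrow> 'x ^ 'q::finite \<Rightarrow> 'y" where
  "tCh2 C r v = (\<Sum>b\<in>UNIV. fourier T0 C (fidx r (- int (ix b))) (v $ b))"

definition synth :: "(nat \<Rightarrow> 'a \<Rightarrow> 'b::chilbert) \<Rightarrow> nat \<Rightarrow> 'a \<Rightarrow> 'b" where
  "synth F t x = (\<Sum>r<T1. cis (2 * pi * real t * real r / real T1) *\<^sub>C F r x)"

end

end

theory Submission
  imports Defs "HOL-Complex_Analysis.Laurent_Convergence"
begin

text \<open>
  Read every (m/q, n/q)-multirate system as an (m, n)-multirate system. Its period is T/q, so
  its Fourier coefficients of period T vanish off the multiples of q; hence the solution of its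
  resolvent equation is supported on the multiples of q and the system contributes nothing to
  the rows i of the harmonic transfer function with q not dividing i. Near z = 0 the transfer
  function of an error system is the difference of the two transfer functions, so on these
  rows every approximation has the same error, namely the row of the original system.
  The remaining rows are reproduced exactly by the proposed systems: regrouping X^T into
  (X^q)^(T/q) turns their resolvent equation into that of the original system, up to diagonal
  twists by powers of \<epsilon>. So their error vanishes there, and they are optimal.
\<close>

section \<open>Complex scalar multiplication\<close>

subclass (in chilbert) banach ..

lemma scaleC_one [simp]: "(1::complex) *\<^sub>C (x::'a::chilbert) = x"
  using scaleC_of_real[of 1 x] by simp

lemma scaleC_zero_left [simp]: "(0::complex) *\<^sub>C (x::'a::chilbert) = 0"
  using scaleC_of_real[of 0 x] by simp

lemma scaleC_zero_right [simp]: "c *\<^sub>C (0::'a::chilbert) = 0"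
  using scaleC_add_right[of c 0 0] by simp

lemma scaleC_minus_right: "c *\<^sub>C (- x::'a::chilbert) = - (c *\<^sub>C x)"
  using scaleC_add_right[of c x "-x"] by (simp add: eq_neg_iff_add_eq_0 add.commute)

lemma scaleC_diff_right: "c *\<^sub>C (x - y::'a::chilbert) = c *\<^sub>C x - c *\<^sub>C y"
  using scaleC_add_right[of c x "-y"] by (simp add: scaleC_minus_right)

lemma scaleC_sum_right: "c *\<^sub>C (\<Sum>i\<in>I. f i::'a::chilbert) = (\<Sum>i\<in>I. c *\<^sub>C f i)"
  by (induction I rule: infinite_finite_induct) (auto simp: scaleC_add_right)

lemma scaleC_sum_left: "(\<Sum>i\<in>I. f i) *\<^sub>C (x::'a::chilbert) = (\<Sum>i\<in>I. f i *\<^sub>C x)"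
  by (induction I rule: infinite_finite_induct) (auto simp: scaleC_add_left)

lemma scaleR_scaleC: "r *\<^sub>R (c *\<^sub>C (x::'a::chilbert)) = (complex_of_real r * c) *\<^sub>C x"
  by (simp add: scaleC_of_real[symmetric] scaleC_scaleC)

lemma scaleC_scaleR: "c *\<^sub>C (r *\<^sub>R (x::'a::chilbert)) = (complex_of_real r * c) *\<^sub>C x"
  by (simp add: scaleC_of_real[symmetric] scaleC_scaleC mult.commute)

lemma scaleC_cis_cancel [simp]:
  "cis a *\<^sub>C (cis (- a) *\<^sub>C (x::'a::chilbert)) = x" "cis (- a) *\<^sub>C (cis a *\<^sub>C x) = x"
  by (simp_all add: scaleC_scaleC cis_mult)

lemma scaleC_Complex: "Complex a b *\<^sub>C (x::'a::chilbert) = a *\<^sub>R x + b *\<^sub>R (\<i> *\<^sub>C x)"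
proof -
  have "Complex a b = complex_of_real a + complex_of_real b * \<i>"
    by (simp add: complex_eq_iff)
  thus ?thesis by (simp add: scaleC_add_left scaleC_of_real[symmetric] scaleC_scaleC)
qed

lemma scaleC_ii_ii [simp]: "\<i> *\<^sub>C (\<i> *\<^sub>C (x::'a::chilbert)) = - x"
  using scaleC_of_real[of "-1" x] by (simp add: scaleC_scaleC)

lemma inner_scaleC_ii_left: "inner (\<i> *\<^sub>C x) (y::'a::chilbert) = - inner x (\<i> *\<^sub>C y)"
  using inner_scaleC_ii[of "\<i> *\<^sub>C x" y] by simp

lemma norm_scaleC [simp]: "norm (c *\<^sub>C (x::'a::chilbert)) = cmod c * norm x"
proof -
  obtain a b where c: "c = Complex a b" by (metis complex.exhaust)
  have "inner x (\<i> *\<^sub>C x) = 0"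
    using inner_scaleC_ii_left[of x x] by (simp add: inner_commute)
  hence "(norm (c *\<^sub>C x))\<^sup>2 = (a\<^sup>2 + b\<^sup>2) * inner x x"
    unfolding power2_norm_eq_inner
    by (simp add: c scaleC_Complex inner_add_left inner_add_right inner_commute[of "\<i> *\<^sub>C x" x]
        inner_scaleC_ii power2_eq_square algebra_simps)
  also have "\<dots> = (cmod c * norm x)\<^sup>2"
    by (simp add: c cmod_def power2_norm_eq_inner power_mult_distrib)
  finally show ?thesis
    by (metis norm_ge_zero power2_eq_iff_nonneg zero_le_mult_iff)
qed

lemma bounded_linear_scaleC: "bounded_linear (\<lambda>x::'a::chilbert. c *\<^sub>C x)"
proof (rule bounded_linear_intro[where K="cmod c"])
  show "c *\<^sub>C (x + y) = c *\<^sub>C x + c *\<^sub>C y" for x y :: 'a by (rule scaleC_add_right)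
  show "c *\<^sub>C (r *\<^sub>R x) = r *\<^sub>R (c *\<^sub>C x)" for r and x :: 'a
    by (simp add: scaleC_scaleR scaleR_scaleC mult.commute)
  show "norm (c *\<^sub>C x) \<le> norm x * cmod c" for x :: 'a by (simp add: mult.commute)
qed

lemma bounded_clinear_scaleC: "bounded_clinear (\<lambda>x::'a::chilbert. c *\<^sub>C x)"
  unfolding bounded_clinear_def by (simp add: bounded_linear_scaleC scaleC_scaleC mult.commute)

lemma bounded_clinear_compose:
  "bounded_clinear f \<Longrightarrow> bounded_clinear g \<Longrightarrow> bounded_clinear (\<lambda>x. f (g x))"
  unfolding bounded_clinear_def using bounded_linear_compose[of f g] by (auto simp: o_def)

lemma bounded_clinear_add:
  "bounded_clinear f \<Longrightarrow> bounded_clinear g \<Longrightarrow> bounded_clinear (\<lambda>x. f x + g x)"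
  unfolding bounded_clinear_def by (auto intro: bounded_linear_add simp: scaleC_add_right)

lemma bounded_clinear_zero: "bounded_clinear (\<lambda>x::'a::chilbert. 0::'b::chilbert)"
  unfolding bounded_clinear_def by (simp add: bounded_linear_zero)

lemma bounded_clinear_sum:
  "(\<And>i. i \<in> I \<Longrightarrow> bounded_clinear (f i)) \<Longrightarrow> bounded_clinear (\<lambda>x. \<Sum>i\<in>I. f i x)"
  by (induction I rule: infinite_finite_induct) (simp_all add: bounded_clinear_zero bounded_clinear_add)

lemma bounded_clinear_scaleR: "bounded_clinear f \<Longrightarrow> bounded_clinear (\<lambda>x. r *\<^sub>R f x)"
  unfolding bounded_clinear_def
  by (auto intro: bounded_linear_compose[OF bounded_linear_scaleR_right, of f r, unfolded o_def]
        simp: scaleR_scaleC scaleC_scaleR)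

lemmas bounded_clinear_intros =
  bounded_clinear_compose[OF bounded_clinear_scaleC] bounded_clinear_sum bounded_clinear_scaleR

lemma bounded_clinear_simps:
  assumes "bounded_clinear f"
  shows "f (x + y) = f x + f y" "f (c *\<^sub>C x) = c *\<^sub>C f x" "f 0 = 0" "f (x - y) = f x - f y"
    "f (\<Sum>i\<in>I. g i) = (\<Sum>i\<in>I. f (g i))" "f (r *\<^sub>R x) = r *\<^sub>R f x"
  using assms unfolding bounded_clinear_def
  by (auto simp: linear_simps bounded_linear.linear linear_sum)

lemma scaleC_vec_nth [simp]: "(c *\<^sub>C v) $ a = c *\<^sub>C (v $ a)"
  by (simp add: scaleC_vec_def)

lemma bounded_clinear_vec_nth: "bounded_clinear (\<lambda>v::'a::chilbert^'n. v $ b)"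
  unfolding bounded_clinear_def by (simp add: scaleC_vec_def bounded_linear_vec_nth)

lemma bounded_linear_vec_lambda:
  assumes "\<And>a. bounded_linear (f a)"
  shows "bounded_linear (\<lambda>x. (\<chi> a. f a x) :: 'b::real_normed_vector^'n)"
proof -
  have "\<forall>a. \<exists>K. \<forall>x. norm (f a x) \<le> norm x * K"
    using assms bounded_linear.bounded by blast
  then obtain K where K: "\<And>a x. norm (f a x) \<le> norm x * K a" by metis
  have "norm ((\<chi> a. f a x) :: 'b^'n) \<le> norm x * (\<Sum>a\<in>UNIV. K a)" for x
  proof -
    have "norm ((\<chi> a. f a x) :: 'b^'n) \<le> (\<Sum>a\<in>UNIV. norm (f a x))"
      unfolding norm_vec_def by (rule order_trans[OF L2_set_le_sum]) auto
    also have "\<dots> \<le> (\<Sum>a\<in>UNIV. norm x * K a)" by (intro sum_mono K)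
    finally show ?thesis by (simp add: sum_distrib_left)
  qed
  moreover have "linear (\<lambda>x. (\<chi> a. f a x) :: 'b^'n)"
    using assms by (auto simp: linear_iff vec_eq_iff linear_simps)
  ultimately show ?thesis
    by (auto simp: bounded_linear_def bounded_linear_axioms_def linear_conv_bounded_linear)
qed

lemma bounded_clinear_vec_lambda:
  "(\<And>a. bounded_clinear (f a)) \<Longrightarrow> bounded_clinear (\<lambda>x. (\<chi> a. f a x) :: 'b::chilbert^'n)"
  unfolding bounded_clinear_def by (auto intro!: bounded_linear_vec_lambda simp: scaleC_vec_def)

lemma bounded_clinear_map_prod:
  assumes "bounded_clinear f" and "bounded_clinear g"
  shows "bounded_clinear (\<lambda>(x, z). (f x, g z))"
proof -
  have "bounded_linear (\<lambda>p. (f (fst p), g (snd p)))"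
    using assms unfolding bounded_clinear_def
    by (intro bounded_linear_Pair bounded_linear_compose[OF _ bounded_linear_fst]
        bounded_linear_compose[OF _ bounded_linear_snd]) auto
  moreover have "(\<lambda>(x, z). (f x, g z)) = (\<lambda>p. (f (fst p), g (snd p)))"
    by (simp add: fun_eq_iff split_beta)
  ultimately show ?thesis
    using assms by (simp add: bounded_clinear_def scaleC_prod_def)
qed

lemma bounded_clinear_fourier: "(\<And>t. bounded_clinear (F t)) \<Longrightarrow> bounded_clinear (fourier T F k)"
  unfolding fourier_def[abs_def] by (intro bounded_clinear_intros) auto

lemma bounded_clinear_toep: "(\<And>t. bounded_clinear (A t)) \<Longrightarrow> bounded_clinear (toep P A r l)"
  unfolding toep_def[abs_def] by (rule bounded_clinear_fourier)

section \<open>Discrete Fourier analysis\<close>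

lemma sum_roots_of_unity:
  fixes T :: nat and d :: int
  assumes T: "0 < T"
  shows "(\<Sum>t<T. cis (2 * pi * real t * of_int d / real T)) = (if int T dvd d then of_nat T else 0)"
proof -
  define \<omega> where "\<omega> = cis (2 * pi * of_int d / real T)"
  have pw: "cis (2 * pi * real t * of_int d / real T) = \<omega> ^ t" for t
    unfolding \<omega>_def by (subst Complex.DeMoivre) (simp add: field_simps)
  have "\<omega> ^ T = cis (2 * pi * of_int d)"
    using T by (simp add: \<omega>_def Complex.DeMoivre field_simps)
  hence \<omega>T: "\<omega> ^ T = 1" by (simp add: cis_multiple_2pi)
  have "\<omega> = 1 \<longleftrightarrow> (\<exists>j::int. 2 * pi * of_int d / real T = of_int (2 * j) * pi)"
    by (simp add: \<omega>_def cis_conv_exp exp_eq_1)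
  also have "\<dots> \<longleftrightarrow> (\<exists>j::int. d = int T * j)"
    using T by (auto simp: field_simps) (metis of_int_eq_iff of_int_mult of_int_of_nat_eq)+
  finally have "\<omega> = 1 \<longleftrightarrow> int T dvd d" by (auto simp: dvd_def)
  thus ?thesis unfolding pw sum_gp_strict using \<omega>T by auto
qed

lemma sum_lessThan_mult_split:
  fixes g :: "nat \<Rightarrow> 'a::comm_monoid_add"
  shows "(\<Sum>t<Q * L. g t) = (\<Sum>j<Q. \<Sum>t<L. g (t + j * L))"
proof -
  have "(\<Sum>t<Q * L. g t) = (\<Sum>j<Q. sum g {j * L..<j * L + L})"
    using sum.nat_group[of g L Q] by simp
  also have "\<dots> = (\<Sum>j<Q. \<Sum>t<L. g (t + j * L))"
    using sum.shift_bounds_nat_ivl[of g 0 "_ * L" L] by (simp add: atLeast0LessThan add.commute)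
  finally show ?thesis .
qed

lemma periodic_add_mult: "(\<And>t::nat. F (t + L) = F t) \<Longrightarrow> F (t + (j::nat) * L) = F t"
  by (induction j) (simp_all, metis add.commute add.left_commute)

lemma cis_add_2pi_int: "cis (a + 2 * pi * of_int N) = cis a"
  by (simp flip: cis_mult)

lemma fourier_mod_cong:
  assumes "0 < T" "k mod int T = k' mod int T"
  shows "fourier T F k = fourier T F k'"
proof -
  obtain j where kj: "k = k' + int T * j"
    using assms(2) by (metis mod_eqE mult.commute add.commute dvd_def eq_diff_eq)
  have "- 2 * pi * real t * real_of_int k / real T
      = - 2 * pi * real t * real_of_int k' / real T + 2 * pi * real_of_int (- int t * j)" for t
    using assms(1) by (simp add: kj field_simps)
  thus ?thesis unfolding fourier_def by (simp only: cis_add_2pi_int)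
qed

lemma fourier_mult_period:
  assumes L: "0 < L" and Q: "0 < Q"
  shows "fourier (Q * L) F k x = (1 / real (Q * L)) *\<^sub>R
     (\<Sum>t<L. cis (- 2 * pi * real t * real_of_int k / real (Q * L)) *\<^sub>C
        (\<Sum>j<Q. cis (- 2 * pi * real j * real_of_int k / real Q) *\<^sub>C F (t + j * L) x))"
proof -
  have "cis (- 2 * pi * real (t + j * L) * real_of_int k / real (Q * L))
      = cis (- 2 * pi * real t * real_of_int k / real (Q * L)) * cis (- 2 * pi * real j * real_of_int k / real Q)"
    for t j
    unfolding cis_mult using L Q by (rule_tac arg_cong[where f=cis]) (simp add: field_simps)
  thus ?thesis
    unfolding fourier_def sum_lessThan_mult_split[where Q=Q and L=L]
    by (subst sum.swap) (simp only: scaleC_sum_right scaleC_scaleC)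
qed

lemma fourier_periodic_eq_0:
  assumes L: "0 < L" and Q: "0 < Q" and per: "\<And>t. F (t + L) = F t" and k: "\<not> int Q dvd k"
  shows "fourier (Q * L) F k x = 0"
proof -
  have "(\<Sum>j<Q. cis (- 2 * pi * real j * real_of_int k / real Q) *\<^sub>C F (t + j * L) x)
      = (\<Sum>j<Q. cis (2 * pi * real j * real_of_int (- k) / real Q)) *\<^sub>C F t x" for t
    by (simp add: periodic_add_mult[where F=F, OF per] scaleC_sum_left)
  also have "\<dots> t = 0" for t using sum_roots_of_unity[OF Q, of "-k"] k by simp
  finally show ?thesis by (simp add: fourier_mult_period[OF L Q])
qed

lemma fourier_dvd_eq:
  assumes L: "0 < L" and Q: "0 < Q" and k: "int Q dvd k"
  shows "fourier (Q * L) F k x = (1 / real (Q * L)) *\<^sub>R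
     (\<Sum>t<L. cis (- 2 * pi * real t * real_of_int k / real (Q * L)) *\<^sub>C (\<Sum>j<Q. F (t + j * L) x))"
proof -
  obtain k' where k': "k = int Q * k'" using k by auto
  have "cis (- 2 * pi * real j * real_of_int k / real Q) = 1" for j
  proof -
    have "- 2 * pi * real j * real_of_int k / real Q = 2 * pi * real_of_int (- int j * k')"
      using Q by (simp add: k' field_simps)
    thus ?thesis by (metis cis_multiple_2pi Ints_of_int)
  qed
  thus ?thesis by (simp add: fourier_mult_period[OF L Q])
qed

lemma fourier_synthesis:
  fixes G :: "nat \<Rightarrow> 'a \<Rightarrow> 'b::chilbert"
  assumes L: "0 < L" and Q: "0 < Q"
  shows "fourier (Q * L) (\<lambda>t x. \<Sum>r<L. cis (2 * pi * real t * real r / real L) *\<^sub>C G r x) k x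
     = (\<Sum>r<L. if int (Q * L) dvd int r * int Q - k then G r x else 0)"
proof -
  have c: "cis (- 2 * pi * real t * real_of_int k / real (Q * L)) * cis (2 * pi * real t * real r / real L)
     = cis (2 * pi * real t * real_of_int (int r * int Q - k) / real (Q * L))" for t r
    unfolding cis_mult using L Q by (rule_tac arg_cong[where f=cis]) (simp add: field_simps)
  have "fourier (Q * L) (\<lambda>t x. \<Sum>r<L. cis (2 * pi * real t * real r / real L) *\<^sub>C G r x) k x
     = (1 / real (Q * L)) *\<^sub>R (\<Sum>r<L. (\<Sum>t<Q * L.
          cis (2 * pi * real t * real_of_int (int r * int Q - k) / real (Q * L))) *\<^sub>C G r x)"
    unfolding fourier_def
    by (simp only: scaleC_sum_right scaleC_scaleC c scaleC_sum_left sum.swap[where A="{..<Q*L}"])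
  also have "\<dots> = (1 / real (Q * L)) *\<^sub>R
      (\<Sum>r<L. (if int (Q * L) dvd int r * int Q - k then of_nat (Q * L) else 0) *\<^sub>C G r x)"
  proof -
    have "(\<Sum>t<Q * L. cis (2 * pi * real t * real_of_int (int r * int Q - k) / real (Q * L)))
       = (if int (Q * L) dvd int r * int Q - k then of_nat (Q * L) else 0)" for r
      by (rule sum_roots_of_unity) (use L Q in simp)
    thus ?thesis by (simp only:)
  qed
  also have "\<dots> = (\<Sum>r<L. if int (Q * L) dvd int r * int Q - k then G r x else 0)"
    unfolding scaleR_sum_right by (intro sum.cong refl) (use L Q in \<open>auto simp: scaleR_scaleC\<close>)
  finally show ?thesis .
qed

lemma mult_index_mod:
  fixes L Q :: nat and k :: int
  assumes L: "0 < L" and Q: "0 < Q" and k: "int Q dvd k"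
  defines "r0 \<equiv> nat ((k mod int (Q * L)) div int Q)"
  shows "r0 < L" and "int r0 * int Q = k mod int (Q * L)"
    and "r < L \<Longrightarrow> int (Q * L) dvd int r * int Q - k \<longleftrightarrow> r = r0"
proof -
  define K where "K = int (Q * L)"
  have K: "0 < K" using L Q by (simp add: K_def)
  obtain j where j: "k mod K = j * int Q"
    using k by (metis dvd_def dvd_mod dvd_triv_left of_nat_mult mult.commute K_def)
  have "0 \<le> j * int Q" "j * int Q < int L * int Q"
    using pos_mod_sign[OF K, of k] pos_mod_bound[OF K, of k] unfolding j by (simp_all add: K_def mult.commute)
  hence j0: "0 \<le> j" "j < int L"
    using Q by (auto simp: zero_le_mult_iff)
  have r0: "r0 = nat j" unfolding r0_def K_def[symmetric] j using Q by simp
  show "r0 < L" "int r0 * int Q = k mod int (Q * L)"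
    using j0 unfolding K_def[symmetric] by (auto simp: r0 j)
  assume "r < L"
  have "int (Q * L) dvd int r * int Q - k \<longleftrightarrow> (int r * int Q) mod K = k mod K"
    unfolding K_def by (simp only: mod_eq_dvd_iff)
  also have "(int r * int Q) mod K = int r * int Q"
    using \<open>r < L\<close> Q by (intro mod_pos_pos_trivial) (auto simp: K_def)
  also have "int r * int Q = k mod K \<longleftrightarrow> r = r0"
    using Q j0 by (auto simp: r0 j)
  finally show "int (Q * L) dvd int r * int Q - k \<longleftrightarrow> r = r0" .
qed

lemma toep_eq_fourier: "0 < P \<Longrightarrow> toep P F r l = fourier P F (int r - int l)"
  unfolding toep_def by (rule fourier_mod_cong) simp_all

definition block_idx :: "nat \<Rightarrow> nat \<Rightarrow> nat \<Rightarrow> int \<Rightarrow> nat" where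
  "block_idx m n q k = nat ((k mod int (T0 m n)) div int q)"

context
  fixes m n q :: nat
  assumes q_dvd_T0: "q dvd T0 m n" and T0_pos: "0 < T0 m n"
begin

lemma T0_eq_mult_T1: "T0 m n = q * T1 m n q"
  using q_dvd_T0 by (simp add: T1_def)

lemma T1_pos: "0 < T1 m n q" and q_pos: "0 < q"
  using T0_pos T0_eq_mult_T1 by (auto simp: zero_less_mult_iff)

lemma toep_synth:
  "toep (T0 m n) (synth m n q F) r l =
     (if int q dvd int r - int l then F (block_idx m n q (int r - int l)) else (\<lambda>_. 0))"
proof
  fix x
  define k where "k = int r - int l"
  have "toep (T0 m n) (synth m n q F) r l x
      = (\<Sum>\<rho><T1 m n q. if int (q * T1 m n q) dvd int \<rho> * int q - k then F \<rho> x else 0)"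
    unfolding toep_eq_fourier[OF T0_pos] k_def[symmetric]
    unfolding T0_eq_mult_T1 synth_def by (rule fourier_synthesis[OF T1_pos q_pos])
  also have "\<dots> = (if int q dvd k then F (block_idx m n q k) x else 0)"
  proof (cases "int q dvd k")
    case True
    have "block_idx m n q k < T1 m n q"
      unfolding block_idx_def T0_eq_mult_T1 by (rule mult_index_mod(1)[OF T1_pos q_pos True])
    moreover have "int (q * T1 m n q) dvd int \<rho> * int q - k \<longleftrightarrow> \<rho> = block_idx m n q k"
      if "\<rho> < T1 m n q" for \<rho>
      unfolding block_idx_def T0_eq_mult_T1 by (rule mult_index_mod(3)[OF T1_pos q_pos True that])
    ultimately show ?thesis using True by (simp cong: if_cong)
  next
    case False
    have "\<not> int (q * T1 m n q) dvd int \<rho> * int q - k" for \<rho>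
      using False dvd_diff[of "int q" "int \<rho> * int q" "int \<rho> * int q - k"]
      by (auto dest: dvd_mult_left)
    thus ?thesis using False by simp
  qed
  finally show "toep (T0 m n) (synth m n q F) r l x =
     (if int q dvd int r - int l then F (block_idx m n q (int r - int l)) else (\<lambda>_. 0)) x"
    by (simp add: k_def)
qed

lemma fidx_block_idx:
  assumes "int q dvd k"
  shows "fidx m n q (block_idx m n q k) d = (k + d) mod int (T0 m n)"
proof -
  have "int (block_idx m n q k) * int q = k mod int (T0 m n)"
    unfolding block_idx_def T0_eq_mult_T1 by (rule mult_index_mod(2)[OF T1_pos q_pos assms])
  thus ?thesis by (simp add: fidx_def mod_add_left_eq)
qed

text \<open>Averaging over the shifts by T1 preserves the block sums of D, and these are all the
  Fourier coefficients at multiples of q depend on.\<close>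

lemma toep_tD:
  assumes "int q dvd int s - int s'"
  shows "toep (T0 m n) (tD m n q D) s s' = toep (T0 m n) D s s'"
proof
  fix u
  have "(\<Sum>j<q. tD m n q D (t + j * T1 m n q) u) = (\<Sum>j<q. D (t + j * T1 m n q) u)"
    if "t < T1 m n q" for t
    using that q_pos by (simp add: tD_def sum_constant_scaleR)
  moreover have "int q dvd (int s - int s') mod int (q * T1 m n q)"
    using assms by (simp add: dvd_mod_iff)
  ultimately show "toep (T0 m n) (tD m n q D) s s' u = toep (T0 m n) D s s' u"
    unfolding toep_def T0_eq_mult_T1 by (simp only: fourier_dvd_eq[OF T1_pos q_pos]) simp
qed

end

section \<open>Solvability of the resolvent equation near z = 0\<close>

definition bvec_norm :: "nat \<Rightarrow> (nat \<Rightarrow> 'a::real_normed_vector) \<Rightarrow> real" where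
  "bvec_norm P v = (\<Sum>r<P. norm (v r))"

lemma bvec_norm_nonneg: "0 \<le> bvec_norm P v"
  unfolding bvec_norm_def by (simp add: sum_nonneg)

lemma norm_le_bvec_norm: "r < P \<Longrightarrow> norm (v r) \<le> bvec_norm P v"
  unfolding bvec_norm_def by (rule member_le_sum) auto

lemma bvec_norm_eq_0_iff: "v \<in> bvecs P \<Longrightarrow> bvec_norm P v = 0 \<longleftrightarrow> v = (\<lambda>_. 0)"
  unfolding bvec_norm_def bvecs_def fun_eq_iff
  by (simp add: sum_nonneg_eq_0_iff) (metis lessThan_iff not_le)

lemma norm_fourier_le:
  assumes "0 < P" and "\<And>t. bounded_clinear (A t)"
  shows "norm (fourier P A k x) \<le> (\<Sum>t<P. onorm (A t)) * norm x"
proof -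
  have "norm (fourier P A k x)
      = (1 / real P) * norm (\<Sum>t<P. cis (- 2 * pi * real t * real_of_int k / real P) *\<^sub>C A t x)"
    unfolding fourier_def by simp
  also have "\<dots> \<le> 1 * (\<Sum>t<P. norm (A t x))"
    using \<open>0 < P\<close> by (intro mult_mono order_trans[OF norm_sum]) (auto simp: sum_nonneg)
  also have "\<dots> \<le> (\<Sum>t<P. onorm (A t) * norm x)"
    using assms(2) by (simp add: sum_mono onorm bounded_clinear_def)
  finally show ?thesis by (simp add: sum_distrib_right)
qed

lemma norm_toep_sum_le:
  assumes "0 < P" and "\<And>t. bounded_clinear (A t)"
  shows "norm (\<Sum>l<P. toep P A r l (v l)) \<le> (\<Sum>t<P. onorm (A t)) * bvec_norm P v"
proof -
  have "norm (\<Sum>l<P. toep P A r l (v l)) \<le> (\<Sum>l<P. norm (toep P A r l (v l)))" by (rule norm_sum)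
  also have "\<dots> \<le> (\<Sum>l<P. (\<Sum>t<P. onorm (A t)) * norm (v l))"
    unfolding toep_def by (intro sum_mono norm_fourier_le assms)
  finally show ?thesis by (simp add: bvec_norm_def sum_distrib_left)
qed

text \<open>toep_step P A is N_P^-1 times the Toeplitz transform of A, so that
  resolv_op P A z = N_P (I - z toep_step P A) on bvecs P.\<close>

definition toep_step :: "nat \<Rightarrow> (nat \<Rightarrow> 'x::chilbert \<Rightarrow> 'x) \<Rightarrow> (nat \<Rightarrow> 'x) \<Rightarrow> nat \<Rightarrow> 'x" where
  "toep_step P A v = (\<lambda>r. if r < P then
     cis (- 2 * pi * real r / real P) *\<^sub>C (\<Sum>l<P. toep P A r l (v l)) else 0)"

lemma resolv_op_eq_toep_step:
  "r < P \<Longrightarrow> resolv_op P A z w r = cis (2 * pi * real r / real P) *\<^sub>C (w r - z *\<^sub>C toep_step P A w r)"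
  using cis_neq_zero[of "2 * pi * real r / real P"]
  by (simp add: resolv_op_def toep_step_def scaleC_diff_right scaleC_scaleC field_simps flip: cis_inverse)

lemma bvec_norm_toep_step_le:
  assumes "0 < P" and "\<And>t. bounded_clinear (A t)"
  shows "bvec_norm P (toep_step P A v) \<le> real P * (\<Sum>t<P. onorm (A t)) * bvec_norm P v"
proof -
  have "bvec_norm P (toep_step P A v) = (\<Sum>r<P. norm (\<Sum>l<P. toep P A r l (v l)))"
    by (simp add: bvec_norm_def toep_step_def)
  also have "\<dots> \<le> (\<Sum>r<P. (\<Sum>t<P. onorm (A t)) * bvec_norm P v)"
    by (intro sum_mono norm_toep_sum_le assms)
  finally show ?thesis by simp
qed

lemma toep_step_diff:
  assumes "\<And>t. bounded_clinear (A t)"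
  shows "toep_step P A (\<lambda>l. v l - w l) r = toep_step P A v r - toep_step P A w r"
  using bounded_clinear_simps(4)[OF bounded_clinear_toep[OF assms]]
  by (simp add: toep_step_def sum_subtractf scaleC_diff_right)

lemma toep_step_suminf:
  assumes "\<And>t. bounded_clinear (A t)" and "\<And>l. summable (\<lambda>k. f k l)"
  shows "toep_step P A (\<lambda>l. \<Sum>k. f k l) r = (\<Sum>k. toep_step P A (f k) r)"
proof -
  have bl: "bounded_linear (toep P A r l)" for l
    using bounded_clinear_toep[OF assms(1)] by (simp add: bounded_clinear_def)
  have "(\<Sum>l<P. toep P A r l (\<Sum>k. f k l)) = (\<Sum>k. \<Sum>l<P. toep P A r l (f k l))"
    using bounded_linear.suminf[OF bl assms(2)] bounded_linear.summable[OF bl assms(2)]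
    by (simp add: suminf_sum)
  moreover have "summable (\<lambda>k. \<Sum>l<P. toep P A r l (f k l))"
    using bounded_linear.summable[OF bl assms(2)] by (simp add: summable_sum)
  ultimately show ?thesis
    by (simp add: toep_step_def bounded_linear.suminf[OF bounded_linear_scaleC])
qed
lemma toep_step_scaleC:
  assumes "\<And>t. bounded_clinear (A t)"
  shows "toep_step P A (\<lambda>l. c *\<^sub>C v l) r = c *\<^sub>C toep_step P A v r"
  using bounded_clinear_simps(2)[OF bounded_clinear_toep[OF assms]]
  by (simp add: toep_step_def scaleC_sum_right scaleC_scaleC mult.commute)

lemma bvec_norm_scaleC: "bvec_norm P (\<lambda>r. c *\<^sub>C v r) = cmod c * bvec_norm P v"
  by (simp add: bvec_norm_def sum_distrib_left)

lemma resolv_op_inj_on: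
  assumes P: "0 < P" and bA: "\<And>t. bounded_clinear (A t)"
    and small: "cmod z * (real P * (\<Sum>t<P. onorm (A t))) < 1"
  shows "inj_on (resolv_op P A z) (bvecs P)"
proof (rule inj_onI)
  fix v w assume v: "v \<in> bvecs P" and w: "w \<in> bvecs P"
    and eq: "resolv_op P A z v = resolv_op P A z w"
  define d where "d l = v l - w l" for l
  have d: "d \<in> bvecs P" using v w by (simp add: bvecs_def d_def)
  have d_fix: "d = (\<lambda>r. z *\<^sub>C toep_step P A d r)"
  proof
    fix r
    show "d r = z *\<^sub>C toep_step P A d r"
    proof (cases "r < P")
      case True
      have "toep_step P A d r = toep_step P A v r - toep_step P A w r"
        unfolding d_def by (rule toep_step_diff[OF bA])
      have "resolv_op P A z v r - resolv_op P A z w r = cis (2 * pi * real r / real P) *\<^sub>C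
          ((v r - z *\<^sub>C toep_step P A v r) - (w r - z *\<^sub>C toep_step P A w r))"
        unfolding resolv_op_eq_toep_step[OF True] by (rule scaleC_diff_right[symmetric])
      also have "(v r - z *\<^sub>C toep_step P A v r) - (w r - z *\<^sub>C toep_step P A w r)
          = d r - z *\<^sub>C toep_step P A d r"
        by (simp add: d_def \<open>toep_step P A d r = _\<close> scaleC_diff_right)
      finally have "cis (- 2 * pi * real r / real P) *\<^sub>C cis (2 * pi * real r / real P) *\<^sub>C
          (d r - z *\<^sub>C toep_step P A d r) = 0"
        using eq by simp
      thus ?thesis by simp
    next
      case False thus ?thesis using d by (simp add: bvecs_def toep_step_def)
    qed
  qed
  have "bvec_norm P d \<le> cmod z * (real P * (\<Sum>t<P. onorm (A t))) * bvec_norm P d"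
    using bvec_norm_toep_step_le[OF P bA, where v=d] norm_ge_zero[of z]
    by (subst (1) d_fix) (simp add: bvec_norm_scaleC mult_left_mono mult.assoc)
  hence "bvec_norm P d = 0"
    using small bvec_norm_nonneg[of P d] by (smt (verit) mult_le_cancel_right1)
  thus "v = w" using d by (simp add: bvec_norm_eq_0_iff d_def fun_eq_iff)
qed

lemma toep_step_iterate_in_bvecs: "v \<in> bvecs P \<Longrightarrow> (toep_step P A ^^ k) v \<in> bvecs P"
  by (cases k) (auto simp: bvecs_def toep_step_def)

lemma norm_toep_step_iterate_le:
  assumes P: "0 < P" and bA: "\<And>t. bounded_clinear (A t)" and v: "v \<in> bvecs P"
  shows "norm (z ^ k *\<^sub>C (toep_step P A ^^ k) v r)
    \<le> (cmod z * (real P * (\<Sum>t<P. onorm (A t)))) ^ k * bvec_norm P v"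
proof -
  define K where "K = real P * (\<Sum>t<P. onorm (A t))"
  have K: "0 \<le> K"
    using bA by (auto simp: K_def bounded_clinear_def intro!: mult_nonneg_nonneg sum_nonneg onorm_pos_le)
  have "bvec_norm P ((toep_step P A ^^ k) v) \<le> K ^ k * bvec_norm P v"
  proof (induction k)
    case (Suc k)
    have "bvec_norm P ((toep_step P A ^^ Suc k) v) \<le> K * bvec_norm P ((toep_step P A ^^ k) v)"
      using bvec_norm_toep_step_le[OF P bA] by (simp add: K_def mult.assoc)
    also have "\<dots> \<le> K ^ Suc k * bvec_norm P v"
      using Suc K by (simp add: mult_left_mono mult.assoc)
    finally show ?case .
  qed simp
  moreover have "(toep_step P A ^^ k) v \<in> bvecs P"
    using v by (rule toep_step_iterate_in_bvecs)
  hence "norm ((toep_step P A ^^ k) v r) \<le> bvec_norm P ((toep_step P A ^^ k) v)"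
    using norm_le_bvec_norm[of r P] bvec_norm_nonneg by (cases "r < P") (auto simp: bvecs_def)
  ultimately show ?thesis
    by (simp add: K_def[symmetric] norm_power power_mult_distrib mult.assoc mult_left_mono)
qed

text \<open>The solution is the Neumann series of z toep_step P A applied to N_P^-1 b.\<close>

lemma resolv_op_surj_on:
  assumes P: "0 < P" and bA: "\<And>t. bounded_clinear (A t)"
    and small: "cmod z * (real P * (\<Sum>t<P. onorm (A t))) < 1" and b: "b \<in> bvecs P"
  shows "\<exists>w\<in>bvecs P. resolv_op P A z w = b"
proof -
  define \<theta> where "\<theta> = cmod z * (real P * (\<Sum>t<P. onorm (A t)))"
  have \<theta>: "0 \<le> \<theta>" "\<theta> < 1"
    using small bA
    by (auto simp: \<theta>_def bounded_clinear_def intro!: mult_nonneg_nonneg sum_nonneg onorm_pos_le)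
  define v0 where "v0 r = cis (- 2 * pi * real r / real P) *\<^sub>C b r" for r
  have v0: "v0 \<in> bvecs P" using b by (simp add: bvecs_def v0_def)
  define v where "v k = (toep_step P A ^^ k) v0" for k
  have summ: "summable (\<lambda>k. z ^ k *\<^sub>C v k r)" for r
    using \<theta> norm_toep_step_iterate_le[where A=A and z=z, OF P bA v0, folded \<theta>_def]
    by (intro summable_comparison_test'[OF summable_mult2[OF summable_geometric], where N=0])
      (auto simp: v_def)
  define w where "w r = (\<Sum>k. z ^ k *\<^sub>C v k r)" for r
  have w: "w \<in> bvecs P"
    using toep_step_iterate_in_bvecs[OF v0] by (simp add: w_def v_def bvecs_def)
  have zw: "(\<lambda>l. z *\<^sub>C w l) = (\<lambda>l. \<Sum>k. z ^ Suc k *\<^sub>C v k l)"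
    unfolding w_def by (simp add: bounded_linear.suminf[OF bounded_linear_scaleC summ] scaleC_scaleC)
  have "z *\<^sub>C toep_step P A w r = toep_step P A (\<lambda>l. \<Sum>k. z ^ Suc k *\<^sub>C v k l) r" for r
    by (simp add: toep_step_scaleC[OF bA, symmetric] zw)
  also have "\<dots> r = (\<Sum>k. toep_step P A (\<lambda>l. z ^ Suc k *\<^sub>C v k l) r)" for r
    using bounded_linear.summable[OF bounded_linear_scaleC summ, of z]
    by (intro toep_step_suminf bA) (simp add: scaleC_scaleC)
  also have "\<dots> r = (\<Sum>k. z ^ Suc k *\<^sub>C v (Suc k) r)" for r
    by (simp add: toep_step_scaleC[OF bA] v_def)
  also have "\<dots> r = w r - v0 r" for r
    using suminf_split_head[OF summ[of r]] by (simp add: w_def v_def)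
  finally have "w r - z *\<^sub>C toep_step P A w r = v0 r" for r by simp
  hence "resolv_op P A z w r = b r" for r
    using b by (cases "r < P") (simp_all add: resolv_op_eq_toep_step v0_def, simp add: resolv_op_def bvecs_def)
  hence "resolv_op P A z w = b" ..
  thus ?thesis using w by blast
qed

lemma eventually_nhds_0_iff:
  "eventually P (nhds (0::complex)) \<longleftrightarrow> (\<exists>\<rho>>0. \<forall>z. cmod z < \<rho> \<longrightarrow> P z)"
  by (simp add: eventually_nhds_metric dist_norm)

lemma eventually_resolv_op_bij_betw:
  assumes P: "0 < P" and bA: "\<And>t. bounded_clinear (A t)"
  shows "\<forall>\<^sub>F z in nhds 0. bij_betw (resolv_op P A z) (bvecs P) (bvecs P)"
proof -
  define K where "K = real P * (\<Sum>t<P. onorm (A t))"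
  have K: "0 \<le> K"
    using bA by (auto simp: K_def bounded_clinear_def intro!: mult_nonneg_nonneg sum_nonneg onorm_pos_le)
  have "bij_betw (resolv_op P A z) (bvecs P) (bvecs P)" if z: "cmod z < 1 / (K + 1)" for z
  proof -
    have small: "cmod z * K < 1"
      using z K by (smt (verit, best) mult_left_mono norm_ge_zero pos_less_divide_eq)
    have "resolv_op P A z ` bvecs P \<subseteq> bvecs P" by (auto simp: resolv_op_def bvecs_def)
    moreover have "bvecs P \<subseteq> resolv_op P A z ` bvecs P"
      using resolv_op_surj_on[where A=A, OF P bA] small by (fastforce simp: K_def)
    ultimately show ?thesis
      using resolv_op_inj_on[where A=A, OF P bA] small by (auto simp: bij_betw_def K_def)
  qed
  moreover have "0 < 1 / (K + 1)" using K by simp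
  ultimately show ?thesis unfolding eventually_nhds_0_iff by blast
qed

section \<open>Rows of the harmonic transfer function\<close>

definition resolv_sol :: "nat \<Rightarrow> (nat \<Rightarrow> 'x::chilbert \<Rightarrow> 'x) \<Rightarrow> complex \<Rightarrow> (nat \<Rightarrow> 'x) \<Rightarrow> nat \<Rightarrow> 'x" where
  "resolv_sol P A z b = inv_into (bvecs P) (resolv_op P A z) b"

definition input_col :: "nat \<Rightarrow> nat \<Rightarrow> (nat \<Rightarrow> 'u::chilbert \<Rightarrow> 'x::chilbert) \<Rightarrow> 'u \<Rightarrow> nat \<Rightarrow> 'x" where
  "input_col P N B u = (\<lambda>l. if l < P then (\<Sum>s\<in>{s. s < P \<and> s mod N = 0}. toep P B l s u) else 0)"

definition output_row ::
  "nat \<Rightarrow> nat \<Rightarrow> nat \<Rightarrow> (nat \<Rightarrow> 'x::chilbert \<Rightarrow> 'y::chilbert) \<Rightarrow> (nat \<Rightarrow> 'u::chilbert \<Rightarrow> 'y)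
     \<Rightarrow> nat \<Rightarrow> complex \<Rightarrow> (nat \<Rightarrow> 'x) \<Rightarrow> 'u \<Rightarrow> 'y" where
  "output_row P M N C D i z w u = (\<Sum>s\<in>{s. s < P \<and> s mod M = i}.
      z *\<^sub>C (\<Sum>l<P. toep P C s l (w l)) + (\<Sum>s'\<in>{s'. s' < P \<and> s' mod N = 0}. toep P D s s' u))"

lemma htf_entry_eq_output_row:
  "htf_entry M N A B C D i z u = (1 / real (mbar M N)) *\<^sub>R output_row (period M N) M N C D i z
     (resolv_sol (period M N) A z (input_col (period M N) N B u)) u"
  by (simp add: htf_entry_def output_row_def resolv_sol_def input_col_def Let_def)

lemma input_col_in_bvecs: "input_col P N B u \<in> bvecs P"
  by (simp add: input_col_def bvecs_def)

lemma resolv_sol_solves: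
  assumes "bij_betw (resolv_op P A z) (bvecs P) (bvecs P)" and "b \<in> bvecs P"
  shows "resolv_sol P A z b \<in> bvecs P" and "resolv_op P A z (resolv_sol P A z b) = b"
  using assms by (auto simp: resolv_sol_def bij_betw_def inv_into_into f_inv_into_f)

lemma resolv_sol_eqI:
  assumes "bij_betw (resolv_op P A z) (bvecs P) (bvecs P)" and "w \<in> bvecs P"
    and "resolv_op P A z w = b"
  shows "resolv_sol P A z b = w"
  using assms by (auto simp: resolv_sol_def bij_betw_def inv_into_f_f)

abbreviation err_htf_entry where
  "err_htf_entry M N A B C D A' B' C' D' \<equiv> htf_entry M N (\<lambda>t (x, x'). (A t x, A' t x'))
     (\<lambda>t u. (B t u, B' t u)) (\<lambda>t (x, x'). C t x - C' t x') (\<lambda>t u. D t u - D' t u)"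

abbreviation err_htf_coeff where
  "err_htf_coeff M N A B C D A' B' C' D' \<equiv> htf_coeff M N (\<lambda>t (x, x'). (A t x, A' t x'))
     (\<lambda>t u. (B t u, B' t u)) (\<lambda>t (x, x'). C t x - C' t x') (\<lambda>t u. D t u - D' t u)"

lemma resolv_op_map_prod:
  "resolv_op P (\<lambda>t (x, x'). (A t x, A' t x')) z (\<lambda>l. (w l, w' l))
     = (\<lambda>r. (resolv_op P A z w r, resolv_op P A' z w' r))"
  unfolding resolv_op_def toep_def fourier_def
  by (simp add: fun_eq_iff prod_eq_iff fst_sum snd_sum scaleC_prod_def)

lemma input_col_Pair:
  "input_col P N (\<lambda>t u. (B t u, B' t u)) u = (\<lambda>l. (input_col P N B u l, input_col P N B' u l))"
  unfolding input_col_def toep_def fourier_def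
  by (simp add: fun_eq_iff prod_eq_iff fst_sum snd_sum scaleC_prod_def)

lemma output_row_diff:
  "output_row P M N (\<lambda>t (x, x'). C t x - C' t x') (\<lambda>t u. D t u - D' t u) i z (\<lambda>l. (w l, w' l)) u
     = output_row P M N C D i z w u - output_row P M N C' D' i z w' u"
  unfolding output_row_def toep_def fourier_def
  by (simp add: scaleC_diff_right scaleR_diff_right sum_subtractf algebra_simps)

lemma err_htf_entry_eq_diff:
  fixes A :: "nat \<Rightarrow> 'x::chilbert \<Rightarrow> 'x" and A' :: "nat \<Rightarrow> 'x'::chilbert \<Rightarrow> 'x'"
    and B :: "nat \<Rightarrow> 'u::chilbert \<Rightarrow> 'x" and B' :: "nat \<Rightarrow> 'u \<Rightarrow> 'x'"
    and C :: "nat \<Rightarrow> 'x \<Rightarrow> 'y::chilbert" and C' :: "nat \<Rightarrow> 'x' \<Rightarrow> 'y"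
  assumes P: "0 < period M N"
    and bA: "\<And>t. bounded_clinear (A t)" and bA': "\<And>t. bounded_clinear (A' t)"
  shows "\<forall>\<^sub>F z in nhds 0. \<forall>u. err_htf_entry M N A B C D A' B' C' D' i z u
     = htf_entry M N A B C D i z u - htf_entry M N A' B' C' D' i z u"
proof -
  define P where "P = period M N"
  have bAA': "bounded_clinear ((\<lambda>t (x, x'). (A t x, A' t x')) t)" for t
    using bounded_clinear_map_prod[OF bA bA'] by simp
  note bij = eventually_resolv_op_bij_betw[OF P[folded P_def]]
  have "\<forall>\<^sub>F z in nhds 0. bij_betw (resolv_op P (\<lambda>t (x, x'). (A t x, A' t x')) z) (bvecs P) (bvecs P)
      \<and> bij_betw (resolv_op P A z) (bvecs P) (bvecs P) \<and> bij_betw (resolv_op P A' z) (bvecs P) (bvecs P)"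
    using bij[where A="\<lambda>t (x, x'). (A t x, A' t x')", OF bAA'] bij[where A=A, OF bA]
      bij[where A=A', OF bA'] by (intro eventually_conj)
  thus ?thesis
  proof (rule eventually_mono, intro allI)
    fix z u
    assume bij: "bij_betw (resolv_op P (\<lambda>t (x, x'). (A t x, A' t x')) z) (bvecs P) (bvecs P)
      \<and> bij_betw (resolv_op P A z) (bvecs P) (bvecs P) \<and> bij_betw (resolv_op P A' z) (bvecs P) (bvecs P)"
    define w where "w = resolv_sol P A z (input_col P N B u)"
    define w' where "w' = resolv_sol P A' z (input_col P N B' u)"
    note sol = resolv_sol_solves[OF _ input_col_in_bvecs, of P _ z]
    have "resolv_sol P (\<lambda>t (x, x'). (A t x, A' t x')) z (input_col P N (\<lambda>t u. (B t u, B' t u)) u)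
        = (\<lambda>l. (w l, w' l))"
      using bij sol(1)[of A N B u] sol(1)[of A' N B' u]
      by (intro resolv_sol_eqI)
        (auto simp: bvecs_def input_col_Pair resolv_op_map_prod w_def w'_def sol(2) zero_prod_def)
    thus "err_htf_entry M N A B C D A' B' C' D' i z u
        = htf_entry M N A B C D i z u - htf_entry M N A' B' C' D' i z u"
      by (simp add: htf_entry_eq_output_row P_def[symmetric] output_row_diff scaleR_diff_right
          w_def w'_def)
  qed
qed

lemma cinner_scaleC_left: "cinner (c *\<^sub>C x) (y::'a::chilbert) = c * cinner x y"
proof -
  obtain a b where c: "c = Complex a b" by (metis complex.exhaust)
  show ?thesis
    by (simp add: c cinner_def scaleC_Complex inner_add_left inner_scaleC_ii_left inner_scaleC_ii
        complex_eq_iff algebra_simps)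
qed

lemma complex_powser_eq_0:
  fixes a :: "nat \<Rightarrow> complex"
  assumes "0 < \<rho>" and sums: "\<And>z. cmod z < \<rho> \<Longrightarrow> (\<lambda>k. a k * z ^ k) sums 0"
  shows "a k = 0"
proof -
  have "norm (complex_of_real (\<rho> / 2)) \<le> conv_radius a"
    using sums[of "\<rho> / 2"] \<open>0 < \<rho>\<close> by (intro conv_radius_geI) (auto dest: sums_summable)
  hence "fps_conv_radius (Abs_fps a) > 0"
    using \<open>0 < \<rho>\<close> by (auto simp: fps_conv_radius_def intro: less_le_trans[of 0 "ereal (\<rho> / 2)"])
  moreover have "eventually (\<lambda>z. eval_fps (Abs_fps a) z = 0) (nhds 0)"
    using eventually_nhds_in_open[of "ball 0 \<rho>" 0] \<open>0 < \<rho>\<close>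
    by (auto elim!: eventually_mono simp: eval_fps_def sums_unique[OF sums, symmetric])
  ultimately have "(\<lambda>_. 0) has_fps_expansion Abs_fps a"
    by (auto simp: has_fps_expansion_def eventually_mono)
  hence "Abs_fps a = 0"
    using fps_expansion_unique_complex has_fps_expansion_0 by blast
  thus ?thesis by (metis fps_zero_nth fps_nth_Abs_fps)
qed

lemma powser_scaleC_eq_0:
  fixes h :: "nat \<Rightarrow> 'a::chilbert"
  assumes "0 < \<rho>" and sums: "\<And>z. cmod z < \<rho> \<Longrightarrow> (\<lambda>k. z ^ k *\<^sub>C h k) sums 0"
  shows "h k = 0"
proof -
  have "cinner (h k) y = 0" for y
  proof (rule complex_powser_eq_0[OF \<open>0 < \<rho>\<close>])
    fix z :: complex assume "cmod z < \<rho>"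
    hence "(\<lambda>k. cinner (z ^ k *\<^sub>C h k) y) sums 0"
      using bounded_linear.sums[OF bounded_linear_inner_left sums]
      by (auto simp: sums_complex_iff cinner_def)
    thus "(\<lambda>k. cinner (h k) y * z ^ k) sums 0"
      by (simp add: cinner_scaleC_left mult.commute)
  qed
  from this[of "h k"] show ?thesis by (simp add: cinner_def complex_eq_iff)
qed

lemma htf_coeff_eq_The:
  "htf_coeff M N A B C D i
     = (THE h. \<forall>\<^sub>F z in nhds 0. \<forall>u. (\<lambda>k. z ^ k *\<^sub>C h k u) sums htf_entry M N A B C D i z u)"
  by (simp add: htf_coeff_def eventually_nhds_0_iff)

lemma htf_coeff_cong:
  assumes "\<forall>\<^sub>F z in nhds 0. \<forall>u. htf_entry M N A B C D i z u = htf_entry M' N' A' B' C' D' i' z u"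
  shows "htf_coeff M N A B C D i = htf_coeff M' N' A' B' C' D' i'"
proof -
  have "(\<forall>\<^sub>F z in nhds 0. \<forall>u. (\<lambda>k. z ^ k *\<^sub>C h k u) sums htf_entry M N A B C D i z u)
      \<longleftrightarrow> (\<forall>\<^sub>F z in nhds 0. \<forall>u. (\<lambda>k. z ^ k *\<^sub>C h k u) sums htf_entry M' N' A' B' C' D' i' z u)" for h
    using assms by (intro eventually_subst) (auto elim: eventually_mono)
  thus ?thesis unfolding htf_coeff_eq_The by simp
qed

lemma htf_coeff_eq_0:
  assumes zero: "\<forall>\<^sub>F z in nhds 0. \<forall>u. htf_entry M N A B C D i z u = 0"
  shows "htf_coeff M N A B C D i = (\<lambda>k u. 0)"
  unfolding htf_coeff_eq_The
proof (rule the_equality)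
  show "\<forall>\<^sub>F z in nhds 0. \<forall>u. (\<lambda>k. z ^ k *\<^sub>C (\<lambda>k u. 0) k u) sums htf_entry M N A B C D i z u"
    using zero by (auto elim: eventually_mono)
  fix h
  assume "\<forall>\<^sub>F z in nhds 0. \<forall>u. (\<lambda>k. z ^ k *\<^sub>C h k u) sums htf_entry M N A B C D i z u"
  hence "\<forall>\<^sub>F z in nhds 0. \<forall>u. (\<lambda>k. z ^ k *\<^sub>C h k u) sums 0"
    using zero by eventually_elim auto
  then obtain \<rho> where "\<rho> > 0" and "\<And>z u. cmod z < \<rho> \<Longrightarrow> (\<lambda>k. z ^ k *\<^sub>C h k u) sums 0"
    unfolding eventually_nhds_0_iff by blast
  hence "h k u = 0" for k u by (intro powser_scaleC_eq_0)
  thus "h = (\<lambda>k u. 0)" by (simp add: fun_eq_iff)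
qed

section \<open>Systems of the coarser period\<close>

lemma toep_periodic_eq_0:
  assumes "P = q * L" and "0 < L" and "0 < q" and "\<And>t. F (t + L) = F t"
    and "\<not> int q dvd int a - int b"
  shows "toep P F a b x = 0"
  using assms fourier_periodic_eq_0[of L q F "(int a - int b) mod int (q * L)" x]
  by (simp add: toep_def dvd_mod_iff)

lemma resolv_sol_periodic_support:
  fixes A :: "nat \<Rightarrow> 'x::chilbert \<Rightarrow> 'x" and B :: "nat \<Rightarrow> 'u::chilbert \<Rightarrow> 'x"
  assumes P: "P = q * L" and L: "0 < L" and q: "0 < q" "q dvd N"
    and bA: "\<And>t. bounded_clinear (A t)"
    and per: "\<And>t. A (t + L) = A t" "\<And>t. B (t + L) = B t"
    and bij: "bij_betw (resolv_op P A z) (bvecs P) (bvecs P)"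
    and l: "\<not> q dvd l"
  shows "resolv_sol P A z (input_col P N B u) l = 0"
proof -
  note toepA = toep_periodic_eq_0[OF P L q(1), where F=A, OF per(1)]
    and toepB = toep_periodic_eq_0[OF P L q(1), where F=B, OF per(2)]
  define w where "w = resolv_sol P A z (input_col P N B u)"
  define w' where "w' l = (if q dvd l then w l else 0)" for l
  note w = resolv_sol_solves[OF bij input_col_in_bvecs[of P N B u], folded w_def]
  have w': "w' \<in> bvecs P" using w(1) by (simp add: bvecs_def w'_def)
  have "resolv_op P A z w' r = input_col P N B u r" for r
  proof -
    consider "r < P" "q dvd r" | "r < P" "\<not> q dvd r" | "\<not> r < P" by blast
    thus ?thesis
    proof cases
      case 1
      have "toep P A r l (w' l) = toep P A r l (w l)" for l
        using 1 toepA by (cases "q dvd l") (simp_all add: w'_def dvd_diff_right_iff)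
      thus ?thesis using 1 fun_cong[OF w(2), of r] by (simp add: resolv_op_def w'_def)
    next
      case 2
      have "toep P A r l (w' l) = 0" for l
        using 2 toepA bounded_clinear_simps(3)[OF bounded_clinear_toep[where A=A, OF bA]]
        by (cases "q dvd l") (auto simp: w'_def dvd_diff_left_iff)
      moreover have "toep P B r s u = 0" if "s mod N = 0" for s
      proof -
        have "q dvd s" using that q(2) by (meson dvd_trans mod_0_imp_dvd)
        thus ?thesis using 2 toepB by (simp add: dvd_diff_left_iff)
      qed
      ultimately show ?thesis using 2 by (auto simp: resolv_op_def input_col_def w'_def)
    next
      case 3 thus ?thesis by (simp add: resolv_op_def input_col_def)
    qed
  qed
  hence "w = w'" using resolv_sol_eqI[OF bij w'] by (simp add: fun_eq_iff w_def)
  thus ?thesis using l by (simp add: w_def[symmetric] w'_def)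
qed

lemma htf_entry_periodic_row_eq_0:
  fixes A :: "nat \<Rightarrow> 'x::chilbert \<Rightarrow> 'x" and B :: "nat \<Rightarrow> 'u::chilbert \<Rightarrow> 'x"
    and C :: "nat \<Rightarrow> 'x \<Rightarrow> 'y::chilbert" and D :: "nat \<Rightarrow> 'u \<Rightarrow> 'y"
  assumes P: "period M N = q * L" and L: "0 < L" and q: "0 < q" "q dvd M" "q dvd N"
    and bA: "\<And>t. bounded_clinear (A t)" and bC: "\<And>t. bounded_clinear (C t)"
    and per: "\<And>t. A (t + L) = A t" "\<And>t. B (t + L) = B t" "\<And>t. C (t + L) = C t" "\<And>t. D (t + L) = D t"
    and i: "\<not> q dvd i"
  shows "\<forall>\<^sub>F z in nhds 0. \<forall>u. htf_entry M N A B C D i z u = 0"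
proof -
  define P where "P = period M N"
  note toep0 = toep_periodic_eq_0[OF P[folded P_def] L q(1)]
  have P_pos: "0 < P" using P L q by (simp add: P_def)
  have ns: "\<not> q dvd s" if "s mod M = i" for s
    using that i q(2) dvd_mod by blast
  show ?thesis
    using eventually_resolv_op_bij_betw[where A=A, OF P_pos bA]
  proof (rule eventually_mono, intro allI)
    fix z u assume bij: "bij_betw (resolv_op P A z) (bvecs P) (bvecs P)"
    note w0 = resolv_sol_periodic_support[where A=A and B=B, OF P[folded P_def] L q(1,3) bA per(1,2) bij]
    have "toep P C s l (resolv_sol P A z (input_col P N B u) l) = 0" if "s mod M = i" for s l
      using ns[OF that] toep0[where F=C, OF per(3)] w0[of l]
        bounded_clinear_simps(3)[OF bounded_clinear_toep[where A=C, OF bC]]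
      by (cases "q dvd l") (simp_all add: dvd_diff_left_iff)
    moreover have "toep P D s s' u = 0" if "s mod M = i" and "s' mod N = 0" for s s'
    proof -
      have "q dvd s'" using that(2) q(3) by (meson dvd_trans mod_0_imp_dvd)
      thus ?thesis using ns[OF that(1)] toep0[where F=D, OF per(4)] by (simp add: dvd_diff_left_iff)
    qed
    ultimately show "htf_entry M N A B C D i z u = 0"
      by (simp add: htf_entry_eq_output_row output_row_def P_def[symmetric])
  qed
qed

section \<open>Lifting a system to the block state space\<close>

lemma ix_bij: "bij_betw (ix :: 'q::finite \<Rightarrow> nat) UNIV {..<CARD('q)}"
proof -
  have "\<exists>f. bij_betw f (UNIV :: 'q set) {..<CARD('q)}"
    using ex_bij_betw_finite_nat[of "UNIV :: 'q set"] by (simp add: atLeast0LessThan)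
  thus ?thesis unfolding ix_def by (rule someI_ex)
qed

lemma ix_less: "ix (a :: 'q::finite) < CARD('q)"
  using ix_bij[where 'q='q] by (auto simp: bij_betw_def)

lemma sum_dvd_mult_lessThan:
  fixes H :: "nat \<Rightarrow> 'a::comm_monoid_add"
  assumes Q: "0 < Q"
  shows "(\<Sum>l<Q * L. if Q dvd l then H l else 0) = (\<Sum>k<L. H (k * Q))"
proof -
  have "(\<Sum>l<Q * L. if Q dvd l then H l else 0)
      = (\<Sum>k<L. \<Sum>j<Q. if Q dvd (j + k * Q) then H (j + k * Q) else 0)"
    using sum_lessThan_mult_split[of "\<lambda>l. if Q dvd l then H l else 0" L Q] by (simp add: mult.commute)
  also have "\<dots> = (\<Sum>k<L. \<Sum>j<Q. if j = 0 then H (k * Q) else 0)"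
  proof (intro sum.cong refl)
    fix k j assume "j \<in> {..<Q}"
    hence "Q dvd (j + k * Q) \<longleftrightarrow> j = 0"
      by (auto simp: dvd_add_left_iff[symmetric] dest: dvd_imp_le)
    thus "(if Q dvd (j + k * Q) then H (j + k * Q) else 0) = (if j = 0 then H (k * Q) else 0)"
      by auto
  qed
  finally show ?thesis using Q by simp
qed

lemma sum_dvd_blocks:
  fixes G :: "nat \<Rightarrow> 'a::comm_monoid_add"
  assumes Q: "CARD('q::finite) = Q"
  shows "(\<Sum>l<Q * L. if Q dvd l then (\<Sum>b\<in>(UNIV::'q set). G (l + ix b)) else 0) = (\<Sum>t<Q * L. G t)"
proof -
  have "(\<Sum>l<Q * L. if Q dvd l then (\<Sum>b\<in>(UNIV::'q set). G (l + ix b)) else 0)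
      = (\<Sum>k<L. \<Sum>b\<in>(UNIV::'q set). G (k * Q + ix b))"
    using Q finite_UNIV_card_ge_0[where 'a='q] by (intro sum_dvd_mult_lessThan) simp
  also have "\<dots> = (\<Sum>k<L. \<Sum>j<Q. G (k * Q + j))"
    using sum.reindex_bij_betw[OF ix_bij[where 'q='q], of "\<lambda>j. G (_ * Q + j)"] Q by simp
  also have "\<dots> = (\<Sum>t<L * Q. G t)"
    using sum_lessThan_mult_split[of G L Q] by (simp add: add.commute)
  finally show ?thesis by (simp add: mult.commute)
qed

text \<open>Identifying X^P with (X^q)^(P/q) via (l, b) \<mapsto> l + ix b for q dividing l, the
  assumptions say that the Toeplitz transforms of the lifted system are those of the original
  one, up to the diagonal twists \<gamma> on the state and \<delta> on the output of the state equation.\<close>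

locale toeplitz_lift =
  fixes P q :: nat
    and A :: "nat \<Rightarrow> 'x::chilbert \<Rightarrow> 'x" and B :: "nat \<Rightarrow> 'u::chilbert \<Rightarrow> 'x"
    and C :: "nat \<Rightarrow> 'x \<Rightarrow> 'y::chilbert" and D :: "nat \<Rightarrow> 'u \<Rightarrow> 'y"
    and At :: "nat \<Rightarrow> 'x ^ 'q::finite \<Rightarrow> 'x ^ 'q" and Bt :: "nat \<Rightarrow> 'u \<Rightarrow> 'x ^ 'q"
    and Ct :: "nat \<Rightarrow> 'x ^ 'q \<Rightarrow> 'y" and Dt :: "nat \<Rightarrow> 'u \<Rightarrow> 'y"
    and \<gamma> \<delta> :: "'q \<Rightarrow> complex"
  assumes card: "CARD('q) = q" and q_dvd_P: "q dvd P" and P_pos: "0 < P"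
    and bounded_A: "\<And>t. bounded_clinear (A t)" and bounded_At: "\<And>t. bounded_clinear (At t)"
    and toep_At: "\<And>r l y a. q dvd r \<Longrightarrow> q dvd l \<Longrightarrow> r < P \<Longrightarrow> l < P \<Longrightarrow>
      toep P At r l (\<chi> b. \<gamma> b *\<^sub>C y b) $ a = \<delta> a *\<^sub>C (\<Sum>b\<in>UNIV. toep P A (r + ix a) (l + ix b) (y b))"
    and toep_At_eq_0: "\<And>r l x. \<not> int q dvd int r - int l \<Longrightarrow> toep P At r l x = 0"
    and toep_Bt: "\<And>r s a u. q dvd r \<Longrightarrow> q dvd s \<Longrightarrow> r < P \<Longrightarrow>
      toep P Bt r s u $ a = \<delta> a *\<^sub>C toep P B (r + ix a) s u"
    and toep_Bt_eq_0: "\<And>r s u. \<not> int q dvd int r - int s \<Longrightarrow> toep P Bt r s u = 0"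
    and toep_Ct: "\<And>s l y. q dvd s \<Longrightarrow> q dvd l \<Longrightarrow> s < P \<Longrightarrow> l < P \<Longrightarrow>
      toep P Ct s l (\<chi> b. \<gamma> b *\<^sub>C y b) = (\<Sum>b\<in>UNIV. toep P C s (l + ix b) (y b))"
    and toep_Ct_eq_0: "\<And>s l x. \<not> int q dvd int s - int l \<Longrightarrow> toep P Ct s l x = 0"
    and toep_Dt: "\<And>s s' u. int q dvd int s - int s' \<Longrightarrow> toep P Dt s s' u = toep P D s s' u"
    and twist: "\<And>r a (x::'x). cis (2 * pi * real r / real P) *\<^sub>C (\<gamma> a *\<^sub>C x)
      = \<delta> a *\<^sub>C (cis (2 * pi * real (r + ix a) / real P) *\<^sub>C x)"
begin

definition lift :: "(nat \<Rightarrow> 'x) \<Rightarrow> nat \<Rightarrow> 'x ^ 'q" where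
  "lift w l = (if l < P \<and> q dvd l then (\<chi> b. \<gamma> b *\<^sub>C w (l + ix b)) else 0)"

lemma lift_in_bvecs: "lift w \<in> bvecs P"
  by (simp add: bvecs_def lift_def)

lemma block_index_less: "q dvd r \<Longrightarrow> r < P \<Longrightarrow> r + ix (a::'q) < P"
proof -
  assume "q dvd r" "r < P"
  then obtain k where "r = q * k" "q * k < q * (P div q)" using q_dvd_P by auto
  hence "r + q \<le> P" using q_dvd_P by (metis Suc_leI add.commute dvd_div_mult_self mult.commute
        mult_Suc_right mult_le_mono2 mult_less_cancel1)
  thus ?thesis using ix_less[of a] card by simp
qed

lemma sum_blocks: "(\<Sum>l<P. if q dvd l then (\<Sum>b\<in>UNIV. G (l + ix (b::'q))) else 0) = (\<Sum>t<P. G t)"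
  using sum_dvd_blocks[OF card, of G "P div q"] q_dvd_P by simp

lemma toep_At_sum_lift:
  assumes "q dvd r" and "r < P"
  shows "(\<Sum>l<P. toep P At r l (lift w l)) $ a = \<delta> a *\<^sub>C (\<Sum>t<P. toep P A (r + ix a) t (w t))"
proof -
  have "(\<Sum>l<P. toep P At r l (lift w l)) $ a = (\<Sum>l<P. if q dvd l then
      \<delta> a *\<^sub>C (\<Sum>b\<in>(UNIV::'q set). toep P A (r + ix a) (l + ix b) (w (l + ix b))) else 0)"
    unfolding sum_component
  proof (intro sum.cong refl)
    fix l assume "l \<in> {..<P}"
    thus "toep P At r l (lift w l) $ a = (if q dvd l then
        \<delta> a *\<^sub>C (\<Sum>b\<in>(UNIV::'q set). toep P A (r + ix a) (l + ix b) (w (l + ix b))) else 0)"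
      using assms toep_At[OF assms(1) _ assms(2), of l "\<lambda>b. w (l + ix b)" a] toep_At_eq_0
      by (cases "q dvd l") (auto simp: lift_def dvd_diff_right_iff)
  qed
  also have "\<dots> = (\<Sum>l<P. \<delta> a *\<^sub>C (if q dvd l then
      (\<Sum>b\<in>(UNIV::'q set). toep P A (r + ix a) (l + ix b) (w (l + ix b))) else 0))"
    by (intro sum.cong refl) simp
  also have "\<dots> = \<delta> a *\<^sub>C (\<Sum>l<P. if q dvd l then
      (\<Sum>b\<in>(UNIV::'q set). toep P A (r + ix a) (l + ix b) (w (l + ix b))) else 0)"
    by (rule scaleC_sum_right[symmetric])
  finally show ?thesis using sum_blocks[of "\<lambda>t. toep P A (r + ix a) t (w t)"] by simp
qed

lemma input_col_lift:
  "q dvd N \<Longrightarrow> q dvd r \<Longrightarrow> r < P \<Longrightarrow> input_col P N Bt u r $ a = \<delta> a *\<^sub>C input_col P N B u (r + ix a)"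
  using block_index_less[of r a]
  by (auto simp: input_col_def sum_component scaleC_sum_right toep_Bt intro!: sum.cong
      intro: dvd_trans mod_0_imp_dvd)

lemma resolv_op_lift:
  assumes N: "q dvd N" and w: "resolv_op P A z w = input_col P N B u"
  shows "resolv_op P At z (lift w) = input_col P N Bt u"
proof
  fix r
  consider "r < P" "q dvd r" | "r < P" "\<not> q dvd r" | "\<not> r < P" by blast
  thus "resolv_op P At z (lift w) r = input_col P N Bt u r"
  proof cases
    case 1
    show ?thesis
    proof (rule vec_eq_iff[THEN iffD2], rule allI)
      fix a :: 'q
      define R where "R = r + ix a"
      have R: "R < P" unfolding R_def using 1 by (simp add: block_index_less)
      have "resolv_op P At z (lift w) r $ a = cis (2 * pi * real r / real P) *\<^sub>C (lift w r $ a)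
          - z *\<^sub>C ((\<Sum>l<P. toep P At r l (lift w l)) $ a)"
        using 1 by (simp add: resolv_op_def)
      also have "\<dots> = cis (2 * pi * real r / real P) *\<^sub>C (\<gamma> a *\<^sub>C w R)
          - z *\<^sub>C (\<delta> a *\<^sub>C (\<Sum>t<P. toep P A R t (w t)))"
        unfolding toep_At_sum_lift[OF 1(2,1)] using 1 by (simp add: lift_def R_def)
      also have "\<dots> = \<delta> a *\<^sub>C resolv_op P A z w R"
        unfolding twist using R by (simp add: resolv_op_def R_def scaleC_diff_right scaleC_scaleC mult.commute)
      also have "\<dots> = input_col P N Bt u r $ a"
        using input_col_lift[OF N 1(2,1)] by (simp add: w R_def)
      finally show "resolv_op P At z (lift w) r $ a = input_col P N Bt u r $ a" .
    qed
  next
    case 2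
    have "toep P At r l (lift w l) = 0" for l
      using 2 toep_At_eq_0 bounded_clinear_simps(3)[OF bounded_clinear_toep[where A=At, OF bounded_At]]
      by (cases "q dvd l") (auto simp: lift_def dvd_diff_left_iff)
    moreover have "toep P Bt r s u = 0" if "s mod N = 0" for s
    proof -
      have "q dvd s" using that N by (meson dvd_trans mod_0_imp_dvd)
      thus ?thesis using 2 toep_Bt_eq_0 by (simp add: dvd_diff_left_iff)
    qed
    moreover have "lift w r = 0" using 2 by (simp add: lift_def)
    ultimately show ?thesis using 2 by (simp add: resolv_op_def input_col_def)
  next
    case 3 thus ?thesis by (simp add: resolv_op_def input_col_def)
  qed
qed

lemma output_row_lift:
  assumes M: "q dvd M" and N: "q dvd N" and i: "q dvd i"
  shows "output_row P M N Ct Dt i z (lift w) u = output_row P M N C D i z w u"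
  unfolding output_row_def
proof (rule sum.cong[OF refl])
  fix s assume s: "s \<in> {s. s < P \<and> s mod M = i}"
  hence qs: "q dvd s" using M i by (metis (mono_tags) mem_Collect_eq dvd_mod_imp_dvd)
  have "toep P Ct s l (lift w l)
      = (if q dvd l then (\<Sum>b\<in>(UNIV::'q set). toep P C s (l + ix b) (w (l + ix b))) else 0)"
    if "l < P" for l
    using that s qs toep_Ct[OF qs _ _ that, of "\<lambda>b. w (l + ix b)"] toep_Ct_eq_0
    by (cases "q dvd l") (auto simp: lift_def dvd_diff_right_iff)
  hence C: "(\<Sum>l<P. toep P Ct s l (lift w l)) = (\<Sum>l<P. toep P C s l (w l))"
    using sum_blocks[of "\<lambda>t. toep P C s t (w t)"] by simp
  have "q dvd s'" if "s' mod N = 0" for s'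
    using that N by (meson dvd_trans mod_0_imp_dvd)
  hence D: "(\<Sum>s'\<in>{s'. s' < P \<and> s' mod N = 0}. toep P Dt s s' u)
      = (\<Sum>s'\<in>{s'. s' < P \<and> s' mod N = 0}. toep P D s s' u)"
    using qs by (intro sum.cong refl) (simp add: toep_Dt)
  show "z *\<^sub>C (\<Sum>l<P. toep P Ct s l (lift w l)) + (\<Sum>s'\<in>{s'. s' < P \<and> s' mod N = 0}. toep P Dt s s' u)
      = z *\<^sub>C (\<Sum>l<P. toep P C s l (w l)) + (\<Sum>s'\<in>{s'. s' < P \<and> s' mod N = 0}. toep P D s s' u)"
    by (simp only: C D)
qed

lemma htf_entry_lift:
  assumes P: "period M N = P" and M: "q dvd M" and N: "q dvd N" and i: "q dvd i"
  shows "\<forall>\<^sub>F z in nhds 0. \<forall>u. htf_entry M N At Bt Ct Dt i z u = htf_entry M N A B C D i z u"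
  using eventually_conj[OF eventually_resolv_op_bij_betw[where A=A, OF P_pos bounded_A]
      eventually_resolv_op_bij_betw[where A=At, OF P_pos bounded_At]]
proof (rule eventually_mono, intro allI)
  fix z u
  assume bij: "bij_betw (resolv_op P A z) (bvecs P) (bvecs P) \<and> bij_betw (resolv_op P At z) (bvecs P) (bvecs P)"
  define w where "w = resolv_sol P A z (input_col P N B u)"
  have "resolv_op P A z w = input_col P N B u"
    using resolv_sol_solves(2)[OF conjunct1[OF bij] input_col_in_bvecs] by (simp add: w_def)
  hence "resolv_sol P At z (input_col P N Bt u) = lift w"
    using bij by (intro resolv_sol_eqI lift_in_bvecs resolv_op_lift N) auto
  thus "htf_entry M N At Bt Ct Dt i z u = htf_entry M N A B C D i z u"
    by (simp add: htf_entry_eq_output_row P output_row_lift[OF M N i] w_def)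
qed

end

section \<open>The reduced systems and their optimality\<close>

lemma synth_periodic: "synth m n q F (t + T1 m n q) = synth m n q F t"
proof (cases "T1 m n q = 0")
  case False
  have "2 * pi * real (t + T1 m n q) * real r / real (T1 m n q)
      = 2 * pi * real t * real r / real (T1 m n q) + 2 * pi * of_int (int r)" for r
    using False by (simp add: field_simps)
  moreover have "cis (a + 2 * pi * real r) = cis a" for a r
    using cis_add_2pi_int[of a "int r"] by simp
  ultimately show ?thesis by (simp add: fun_eq_iff synth_def)
qed (simp add: synth_def)

lemma tD_periodic: "tD m n q D (t + T1 m n q) = tD m n q D t"
  by (simp add: fun_eq_iff tD_def)

lemma bounded_clinear_synth: "(\<And>r. bounded_clinear (F r)) \<Longrightarrow> bounded_clinear (synth m n q F t)"
  unfolding synth_def[abs_def] by (intro bounded_clinear_intros) auto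

lemma bounded_clinear_tD: "(\<And>t. bounded_clinear (D t)) \<Longrightarrow> bounded_clinear (tD m n q D t)"
  unfolding tD_def[abs_def] by (intro bounded_clinear_intros) auto

lemma bounded_clinear_reduced_coeffs:
  assumes "\<And>t. bounded_clinear (A t)" "\<And>t. bounded_clinear (B t)" "\<And>t. bounded_clinear (C t)"
  shows "bounded_clinear (tAh1 m n q A r :: 'x::chilbert ^ 'q::finite \<Rightarrow> _)"
    and "bounded_clinear (tAh2 m n q A r :: 'x ^ 'q \<Rightarrow> _)"
    and "bounded_clinear (tBh1 m n q B r :: _ \<Rightarrow> 'x ^ 'q)"
    and "bounded_clinear (tBh2 m n q B r :: _ \<Rightarrow> 'x ^ 'q)"
    and "bounded_clinear (tCh1 m n q C r :: 'x ^ 'q \<Rightarrow> _)"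
    and "bounded_clinear (tCh2 m n q C r :: 'x ^ 'q \<Rightarrow> _)"
proof -
  note intros = bounded_clinear_vec_lambda bounded_clinear_sum bounded_clinear_vec_nth
    bounded_clinear_compose[OF bounded_clinear_fourier] bounded_clinear_compose[OF bounded_clinear_scaleC]
  show "bounded_clinear (tAh1 m n q A r :: 'x ^ 'q \<Rightarrow> _)" "bounded_clinear (tAh2 m n q A r :: 'x ^ 'q \<Rightarrow> _)"
    unfolding tAh1_def[abs_def] tAh2_def[abs_def] by (intro intros assms(1))+
  show "bounded_clinear (tBh1 m n q B r :: _ \<Rightarrow> 'x ^ 'q)" "bounded_clinear (tBh2 m n q B r :: _ \<Rightarrow> 'x ^ 'q)"
    unfolding tBh1_def[abs_def] tBh2_def[abs_def] by (intro intros bounded_clinear_fourier assms(2))+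
  show "bounded_clinear (tCh1 m n q C r :: 'x ^ 'q \<Rightarrow> _)" "bounded_clinear (tCh2 m n q C r :: 'x ^ 'q \<Rightarrow> _)"
    unfolding tCh1_def[abs_def] tCh2_def[abs_def] by (intro intros assms(3))+
qed

lemma reduced_periods:
  assumes q: "0 < q" "q dvd m" "q dvd n" and mn: "0 < m" "0 < n"
  shows "T0 m n = q * T1 m n q" "0 < T1 m n q" "T1 m n q = period (m div q) (n div q)"
    "err_M m n (m div q) (n div q) = m" "err_N m n (m div q) (n div q) = n"
proof -
  obtain m1 n1 where m1: "m = q * m1" and n1: "n = q * n1" using q by (auto elim!: dvdE)
  define g1 where "g1 = gcd m1 n1"
  have g: "gcd m n = q * g1" by (simp add: m1 n1 g1_def gcd_mult_distrib_nat)
  have nbar: "nbar m n = n1 div g1"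
    unfolding nbar_def g using q by (simp add: n1)
  have T1: "T1 m n q = m1 * (n1 div g1)"
    unfolding T1_def T0_def period_def nbar using q by (simp add: m1)
  show "T0 m n = q * T1 m n q"
    unfolding T1 T0_def period_def nbar by (simp add: m1)
  show "0 < T1 m n q"
    unfolding T1 using mn m1 n1 by (simp add: g1_def dvd_imp_le div_greater_zero_iff)
  show "T1 m n q = period (m div q) (n div q)"
    unfolding T1 using q by (simp add: period_def nbar_def m1 n1 g1_def)
  have "lcm (gcd m n) (gcd (m div q) (n div q)) = gcd m n"
    using q by (simp add: g m1 n1 lcm_proj1_iff_nat)
  thus "err_M m n (m div q) (n div q) = m" "err_N m n (m div q) (n div q) = n"
    by (simp_all add: err_M_def err_N_def mbar_def nbar_def)
qed

lemma epsm_scaleC_cis [simp]: "epsm T k *\<^sub>C (cis (2 * pi * real k / real T) *\<^sub>C (x::'a::chilbert)) = x"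
  unfolding epsm_def using scaleC_cis_cancel(2)[of "2 * pi * real k / real T" x] by simp

lemma toeplitz_lift_tilde1:
  fixes A :: "nat \<Rightarrow> 'x::chilbert \<Rightarrow> 'x" and B :: "nat \<Rightarrow> 'u::chilbert \<Rightarrow> 'x"
    and C :: "nat \<Rightarrow> 'x \<Rightarrow> 'y::chilbert" and D :: "nat \<Rightarrow> 'u \<Rightarrow> 'y"
  assumes T0: "q dvd T0 m n" "0 < T0 m n" and card: "CARD('q::finite) = q"
    and bA: "\<And>t. bounded_clinear (A t)" and bB: "\<And>t. bounded_clinear (B t)"
    and bC: "\<And>t. bounded_clinear (C t)"
  shows "toeplitz_lift (T0 m n) q A B C D
    (synth m n q (tAh1 m n q A) :: nat \<Rightarrow> 'x ^ 'q \<Rightarrow> 'x ^ 'q) (synth m n q (tBh1 m n q B))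
    (synth m n q (tCh1 m n q C)) (tD m n q D) (\<lambda>b. cis (2 * pi * real (ix b) / real (T0 m n))) (\<lambda>_. 1)"
proof
  note toep_synth = toep_synth[OF T0] and fidx = fidx_block_idx[OF T0]
  show "bounded_clinear (synth m n q (tAh1 m n q A) t :: 'x ^ 'q \<Rightarrow> _)" for t
    by (intro bounded_clinear_synth bounded_clinear_reduced_coeffs(1)[OF bA bB bC])
  fix r l and y :: "'q \<Rightarrow> 'x" and a :: 'q and u
  assume "q dvd r" "q dvd l"
  hence d: "int q dvd int r - int l" by simp
  show "toep (T0 m n) (synth m n q (tAh1 m n q A)) r l
      (\<chi> b. cis (2 * pi * real (ix b) / real (T0 m n)) *\<^sub>C y b) $ a
    = 1 *\<^sub>C (\<Sum>b\<in>UNIV. toep (T0 m n) A (r + ix a) (l + ix b) (y b))"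
    using d by (simp only: toep_synth if_True) (simp add: tAh1_def fidx toep_def; simp_all add: algebra_simps)
  show "toep (T0 m n) (synth m n q (tBh1 m n q B)) r l u $ a = 1 *\<^sub>C toep (T0 m n) B (r + ix a) l u"
    using d by (simp only: toep_synth if_True) (simp add: tBh1_def fidx toep_def; simp_all add: algebra_simps)
  show "toep (T0 m n) (synth m n q (tCh1 m n q C)) r l
      (\<chi> b. cis (2 * pi * real (ix b) / real (T0 m n)) *\<^sub>C y b)
    = (\<Sum>b\<in>UNIV. toep (T0 m n) C r (l + ix b) (y b))"
    using d by (simp only: toep_synth if_True) (simp add: tCh1_def fidx toep_def; simp_all add: algebra_simps)
next
  show "cis (2 * pi * real r / real (T0 m n)) *\<^sub>C (cis (2 * pi * real (ix a) / real (T0 m n)) *\<^sub>C x)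
      = 1 *\<^sub>C (cis (2 * pi * real (r + ix a) / real (T0 m n)) *\<^sub>C x)" for r a and x :: 'x
    by (simp add: scaleC_scaleC cis_mult add_divide_distrib distrib_left)
qed (simp_all add: T0 card bA toep_synth[OF T0] toep_tD[OF T0])

lemma toeplitz_lift_tilde2:
  fixes A :: "nat \<Rightarrow> 'x::chilbert \<Rightarrow> 'x" and B :: "nat \<Rightarrow> 'u::chilbert \<Rightarrow> 'x"
    and C :: "nat \<Rightarrow> 'x \<Rightarrow> 'y::chilbert" and D :: "nat \<Rightarrow> 'u \<Rightarrow> 'y"
  assumes T0: "q dvd T0 m n" "0 < T0 m n" and card: "CARD('q::finite) = q"
    and bA: "\<And>t. bounded_clinear (A t)" and bB: "\<And>t. bounded_clinear (B t)"
    and bC: "\<And>t. bounded_clinear (C t)"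
  shows "toeplitz_lift (T0 m n) q A B C D
    (synth m n q (tAh2 m n q A) :: nat \<Rightarrow> 'x ^ 'q \<Rightarrow> 'x ^ 'q) (synth m n q (tBh2 m n q B))
    (synth m n q (tCh2 m n q C)) (tD m n q D) (\<lambda>_. 1) (\<lambda>a. epsm (T0 m n) (ix a))"
proof
  note toep_synth = toep_synth[OF T0] and fidx = fidx_block_idx[OF T0]
  show "bounded_clinear (synth m n q (tAh2 m n q A) t :: 'x ^ 'q \<Rightarrow> _)" for t
    by (intro bounded_clinear_synth bounded_clinear_reduced_coeffs(2)[OF bA bB bC])
  fix r l and y :: "'q \<Rightarrow> 'x" and a :: 'q and u
  assume "q dvd r" "q dvd l"
  hence d: "int q dvd int r - int l" by simp
  show "toep (T0 m n) (synth m n q (tAh2 m n q A)) r l (\<chi> b. 1 *\<^sub>C y b) $ a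
    = epsm (T0 m n) (ix a) *\<^sub>C (\<Sum>b\<in>UNIV. toep (T0 m n) A (r + ix a) (l + ix b) (y b))"
    using d by (simp only: toep_synth if_True) (simp add: tAh2_def fidx toep_def algebra_simps)
  show "toep (T0 m n) (synth m n q (tBh2 m n q B)) r l u $ a
    = epsm (T0 m n) (ix a) *\<^sub>C toep (T0 m n) B (r + ix a) l u"
    using d by (simp only: toep_synth if_True) (simp add: tBh2_def fidx toep_def algebra_simps)
  show "toep (T0 m n) (synth m n q (tCh2 m n q C)) r l (\<chi> b. 1 *\<^sub>C y b)
    = (\<Sum>b\<in>UNIV. toep (T0 m n) C r (l + ix b) (y b))"
    using d by (simp only: toep_synth if_True) (simp add: tCh2_def fidx toep_def algebra_simps)
next
  show "cis (2 * pi * real r / real (T0 m n)) *\<^sub>C (1 *\<^sub>C x)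
      = epsm (T0 m n) (ix a) *\<^sub>C (cis (2 * pi * real (r + ix a) / real (T0 m n)) *\<^sub>C x)"
    for r a and x :: 'x
    by (simp add: epsm_def scaleC_scaleC cis_mult add_divide_distrib distrib_left)
qed (simp_all add: T0 card bA toep_synth[OF T0] toep_tD[OF T0])

lemma multirate_reduced:
  assumes q: "0 < q" "q dvd m" "q dvd n" and mn: "0 < m" "0 < n"
    and "\<And>r. bounded_clinear (At r)" "\<And>r. bounded_clinear (Bt r)" "\<And>r. bounded_clinear (Ct r)"
    and "\<And>t. bounded_clinear (D t)"
  shows "multirate (m div q) (n div q) (synth m n q At) (synth m n q Bt) (synth m n q Ct) (tD m n q D)"
proof -
  have "0 < m div q" "0 < n div q" using q mn by (auto simp: dvd_div_eq_0_iff)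
  thus ?thesis
    using assms unfolding multirate_def reduced_periods(3)[OF q mn, symmetric]
    by (simp add: synth_periodic tD_periodic bounded_clinear_synth bounded_clinear_tD)
qed

lemma err_htf_coeff_coarse_row:
  fixes A :: "nat \<Rightarrow> 'x::chilbert \<Rightarrow> 'x" and A' :: "nat \<Rightarrow> 'x'::chilbert \<Rightarrow> 'x'"
    and B :: "nat \<Rightarrow> 'u::chilbert \<Rightarrow> 'x" and B' :: "nat \<Rightarrow> 'u \<Rightarrow> 'x'"
    and C :: "nat \<Rightarrow> 'x \<Rightarrow> 'y::chilbert" and C' :: "nat \<Rightarrow> 'x' \<Rightarrow> 'y"
  assumes q: "0 < q" "q dvd m" "q dvd n" and mr: "multirate m n A B C D"
    and mr': "multirate (m div q) (n div q) A' B' C' D'" and i: "\<not> q dvd i"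
  shows "err_htf_coeff m n A B C D A' B' C' D' i = htf_coeff m n A B C D i"
proof -
  have mn: "0 < m" "0 < n" using mr by (auto simp: multirate_def)
  note periods = reduced_periods[OF q mn]
  have P: "period m n = q * T1 m n q" using periods(1) by (simp add: T0_def)
  have P_pos: "0 < period m n" using P periods(2) q by simp
  have "\<forall>\<^sub>F z in nhds 0. \<forall>u. err_htf_entry m n A B C D A' B' C' D' i z u
      = htf_entry m n A B C D i z u - htf_entry m n A' B' C' D' i z u"
    using mr mr' by (intro err_htf_entry_eq_diff P_pos) (auto simp: multirate_def)
  moreover have "\<forall>\<^sub>F z in nhds 0. \<forall>u. htf_entry m n A' B' C' D' i z u = 0"
    using mr' by (intro htf_entry_periodic_row_eq_0[OF P periods(2) q _ _ _ _ _ _ i])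
      (auto simp: multirate_def periods(3))
  ultimately show ?thesis
    by (intro htf_coeff_cong) (auto elim: eventually_elim2)
qed

lemma mr_optimal_if_rows_agree:
  fixes A :: "nat \<Rightarrow> 'x::chilbert \<Rightarrow> 'x" and At :: "nat \<Rightarrow> 'w::chilbert \<Rightarrow> 'w"
    and B :: "nat \<Rightarrow> 'u::chilbert \<Rightarrow> 'x" and C :: "nat \<Rightarrow> 'x \<Rightarrow> 'y::chilbert"
  assumes q: "0 < q" "q dvd m" "q dvd n" and mr: "multirate m n A B C D"
    and mrt: "multirate (m div q) (n div q) At Bt Ct Dt"
    and agree: "\<And>i. q dvd i \<Longrightarrow>
      \<forall>\<^sub>F z in nhds 0. \<forall>u. htf_entry m n At Bt Ct Dt i z u = htf_entry m n A B C D i z u"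
  shows "mr_optimal TYPE('z::chilbert) E m n A B C D (m div q) (n div q) At Bt Ct Dt"
  unfolding mr_optimal_def
proof (intro conjI allI impI mrt)
  fix Ah :: "nat \<Rightarrow> 'z \<Rightarrow> 'z" and Bh :: "nat \<Rightarrow> 'u \<Rightarrow> 'z"
    and Ch :: "nat \<Rightarrow> 'z \<Rightarrow> 'y" and Dh :: "nat \<Rightarrow> 'u \<Rightarrow> 'y"
  assume mrh: "multirate (m div q) (n div q) Ah Bh Ch Dh"
  have mn: "0 < m" "0 < n" using mr by (auto simp: multirate_def)
  note periods = reduced_periods[OF q mn]
  have P_pos: "0 < period m n" using periods(1,2) q by (simp add: T0_def)
  define S :: "(nat \<Rightarrow> 'u \<Rightarrow> 'y) \<Rightarrow> ennreal" where
    "S g = (\<Sum>\<^sub>\<infinity>e\<in>E. \<Sum>\<^sub>\<infinity>k\<in>(UNIV::nat set). ennreal ((norm (g k e))\<^sup>2))" for g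
  have "S (err_htf_coeff m n A B C D At Bt Ct Dt i) \<le> S (err_htf_coeff m n A B C D Ah Bh Ch Dh i)" for i
  proof (cases "q dvd i")
    case True
    have "\<forall>\<^sub>F z in nhds 0. \<forall>u. err_htf_entry m n A B C D At Bt Ct Dt i z u
        = htf_entry m n A B C D i z u - htf_entry m n At Bt Ct Dt i z u"
      using mr mrt by (intro err_htf_entry_eq_diff P_pos) (auto simp: multirate_def)
    hence "err_htf_coeff m n A B C D At Bt Ct Dt i = (\<lambda>k u. 0)"
      using agree[OF True] by (intro htf_coeff_eq_0) (auto elim: eventually_elim2)
    thus ?thesis by (simp add: S_def)
  next
    case False
    thus ?thesis using err_htf_coeff_coarse_row[OF q mr mrt False] err_htf_coeff_coarse_row[OF q mr mrh False]
      by simp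
  qed
  thus "err_norm_sq E m n A B C D (m div q) (n div q) At Bt Ct Dt
      \<le> err_norm_sq E m n A B C D (m div q) (n div q) Ah Bh Ch Dh"
    unfolding err_norm_sq_def periods(4,5) hnorm_sq_def S_def[symmetric] by (intro sum_mono)
qed

theorem theorem13:
  fixes A :: "nat \<Rightarrow> 'x::chilbert \<Rightarrow> 'x" and B :: "nat \<Rightarrow> 'u::chilbert \<Rightarrow> 'x"
    and C :: "nat \<Rightarrow> 'x \<Rightarrow> 'y::chilbert" and D :: "nat \<Rightarrow> 'u \<Rightarrow> 'y"
    and E :: "'u set" and m n q :: nat
  assumes "separable_hilbert TYPE('u)" and "separable_hilbert TYPE('x)"
    and "separable_hilbert TYPE('y)" and "separable_hilbert TYPE('z::chilbert)"
    and "multirate m n A B C D"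
    and "onb E"
    and "0 < q" and "q dvd m" and "q dvd n"
    and "CARD('q::finite) = q"
  shows "mr_optimal TYPE('z) E m n A B C D (m div q) (n div q)
           (synth m n q (tAh1 m n q A) :: nat \<Rightarrow> 'x ^ 'q \<Rightarrow> 'x ^ 'q)
           (synth m n q (tBh1 m n q B)) (synth m n q (tCh1 m n q C)) (tD m n q D)
       \<and> mr_optimal TYPE('z) E m n A B C D (m div q) (n div q)
           (synth m n q (tAh2 m n q A) :: nat \<Rightarrow> 'x ^ 'q \<Rightarrow> 'x ^ 'q)
           (synth m n q (tBh2 m n q B)) (synth m n q (tCh2 m n q C)) (tD m n q D)"
proof -
  note mr = \<open>multirate m n A B C D\<close> and q = \<open>0 < q\<close> \<open>q dvd m\<close> \<open>q dvd n\<close>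
  have mn: "0 < m" "0 < n" and bounded: "\<And>t. bounded_clinear (A t)" "\<And>t. bounded_clinear (B t)"
      "\<And>t. bounded_clinear (C t)" "\<And>t. bounded_clinear (D t)"
    using mr by (auto simp: multirate_def)
  note periods = reduced_periods[OF q mn]
  have T0: "q dvd T0 m n" "0 < T0 m n" and P: "period m n = T0 m n"
    using periods(1,2) q by (simp_all add: T0_def)
  note lift1 = toeplitz_lift_tilde1[OF T0 \<open>CARD('q) = q\<close> bounded(1-3), where D=D]
  note lift2 = toeplitz_lift_tilde2[OF T0 \<open>CARD('q) = q\<close> bounded(1-3), where D=D]
  show ?thesis
    by (intro conjI mr_optimal_if_rows_agree[OF q mr] multirate_reduced[OF q mn]
        toeplitz_lift.htf_entry_lift[OF lift1 P] toeplitz_lift.htf_entry_lift[OF lift2 P]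
        bounded_clinear_reduced_coeffs[OF bounded(1-3)] bounded(4) q)
qed

end
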